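(* Under the standing assumptions of the context, for every integer $\ell\ge1$ the recurrence rate $\mathrm{RR}_\ell(x,\infty,1/2)=\lim_{n\to\infty}\mathrm{RR}_\ell(x,n,1/2)$ exists and \[ \mathrm{RR}_\ell(x,\infty,1/2)=\sum_{l=\ell}^\infty l\,d(\mathcal K_l)>0 . \]
   Context: Standing assumptions: $A=\{0,1\}$, $\Sigma=A^{\mathbb N_0}$ with metric $\rho(y,z)=2^{-\min\{i\ge0:\,y_i\ne z_i\}}$ ($y\ne z$) and shift $\sigma$. $\zeta:A\to A^*$ is a binary substitution of constant length $q\ge2$, primitive, aperiodic (its subshift $X_\zeta$ contains a non-$\sigma$-periodic sequence), with $\zeta(0)$ starting with $0$; $x=\lim_k\zeta^k(0)$ its fixed point starting with $0$. For $n\in\mathbb N\cup\{\infty\}$, $n\ge2$, the recurrence plot $R(x,n,1/2)$ has indices $0\le i,j<n$ and entry $1$ iff $x_i=x_j$. A line of length $\ell$: $(i,j,\ell)$ with $0\le i,j\le n-\ell$, $i\ne j$, entries $(i+k,j+k)=1$ for $0\le k<\ell$, entry $(i-1,j-1)=0$ if $\min\{i,j\}>0$, entry $(i+\ell,j+\ell)=0$ if $\max\{i,j\}<n-\ell$ (always required for $n=\infty$); inner if $\min\{i,j\}>0$ and (for finite $n$) $\max\{i,j\}<n-\ell$. For finite $n$: $N_\ell$ = number of all lines of length exactly $\ell$, $\lambda_\ell=N_\ell/(n^2-n)$, $\mathrm{RR}_\ell(x,n,1/2)=\sum_{l\ge\ell}l\lambda_l$. $\mathcal K_l=\{(i,j)\in\mathbb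 N^2:(i,j,l)\text{ inner line in }R(x,\infty,1/2)\}$; $d(M)=\lim_n n^{-2}\#(M\cap[0,n)^2)$ is the asymptotic density, and it is known that $d(\mathcal K_l)$ exists for all $l$. *)

theory Defs
  imports Complex_Main
begin

text \<open>Alphabet A = {0,1} is encoded as bool: False = 0, True = 1.
  Sequences in Sigma are functions nat => bool.\<close>

definition subst_word :: "(bool \<Rightarrow> bool list) \<Rightarrow> bool list \<Rightarrow> bool list" where
  "subst_word \<zeta> w = concat (map \<zeta> w)"

definition subst_iter :: "(bool \<Rightarrow> bool list) \<Rightarrow> nat \<Rightarrow> bool \<Rightarrow> bool list" where
  "subst_iter \<zeta> k a = (subst_word \<zeta> ^^ k) [a]"

definition const_length :: "(bool \<Rightarrow> bool list) \<Rightarrow> nat \<Rightarrow> bool" where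
  "const_length \<zeta> q \<longleftrightarrow> (\<forall>a. length (\<zeta> a) = q)"

definition primitive_subst :: "(bool \<Rightarrow> bool list) \<Rightarrow> bool" where
  "primitive_subst \<zeta> \<longleftrightarrow> (\<exists>k\<ge>1. \<forall>a b. b \<in> set (subst_iter \<zeta> k a))"

definition is_factor :: "'a list \<Rightarrow> 'a list \<Rightarrow> bool" where
  "is_factor w v \<longleftrightarrow> (\<exists>u1 u2. v = u1 @ w @ u2)"

definition subst_language :: "(bool \<Rightarrow> bool list) \<Rightarrow> bool list set" where
  "subst_language \<zeta> = {w. \<exists>k a. is_factor w (subst_iter \<zeta> k a)}"

definition subshift :: "(bool \<Rightarrow> bool list) \<Rightarrow> (nat \<Rightarrow> bool) set" where
  "subshift \<zeta> = {y. \<forall>i m. map y [i..<i+m] \<in> subst_language \<zeta>}"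

definition shift_periodic :: "(nat \<Rightarrow> 'a) \<Rightarrow> bool" where
  "shift_periodic y \<longleftrightarrow> (\<exists>p>0. \<forall>i. y (i + p) = y i)"

definition aperiodic_subst :: "(bool \<Rightarrow> bool list) \<Rightarrow> bool" where
  "aperiodic_subst \<zeta> \<longleftrightarrow> (\<exists>y\<in>subshift \<zeta>. \<not> shift_periodic y)"

text \<open>x is the fixed point lim_k zeta^k(0): it agrees with every zeta^k(0) on its length.\<close>
definition is_fixed_point_of_0 :: "(bool \<Rightarrow> bool list) \<Rightarrow> (nat \<Rightarrow> bool) \<Rightarrow> bool" where
  "is_fixed_point_of_0 \<zeta> x \<longleftrightarrow>
     (\<forall>k i. i < length (subst_iter \<zeta> k False) \<longrightarrow> x i = subst_iter \<zeta> k False ! i)"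

text \<open>Line (i,j,l) in the finite recurrence plot R(x,n,1/2) (entry 1 iff x_i = x_j).\<close>
definition is_line_fin :: "(nat \<Rightarrow> bool) \<Rightarrow> nat \<Rightarrow> nat \<Rightarrow> nat \<Rightarrow> nat \<Rightarrow> bool" where
  "is_line_fin x n i j l \<longleftrightarrow>
     i + l \<le> n \<and> j + l \<le> n \<and> i \<noteq> j \<and>
     (\<forall>k<l. x (i + k) = x (j + k)) \<and>
     (min i j > 0 \<longrightarrow> x (i - 1) \<noteq> x (j - 1)) \<and>
     (max i j + l < n \<longrightarrow> x (i + l) \<noteq> x (j + l))"

definition N_lines :: "(nat \<Rightarrow> bool) \<Rightarrow> nat \<Rightarrow> nat \<Rightarrow> nat" where
  "N_lines x n l = card {(i, j). i < n \<and> j < n \<and> is_line_fin x n i j l}"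

definition lambda_l :: "(nat \<Rightarrow> bool) \<Rightarrow> nat \<Rightarrow> nat \<Rightarrow> real" where
  "lambda_l x n l = real (N_lines x n l) / (real n ^ 2 - real n)"

text \<open>RR_ell(x,n,1/2) = sum_{l >= ell} l lambda_l (lines have length at most n).\<close>
definition RR_fin :: "(nat \<Rightarrow> bool) \<Rightarrow> nat \<Rightarrow> nat \<Rightarrow> real" where
  "RR_fin x ell n = (\<Sum>l\<in>{ell..n}. real l * lambda_l x n l)"

definition is_inner_line_inf :: "(nat \<Rightarrow> bool) \<Rightarrow> nat \<Rightarrow> nat \<Rightarrow> nat \<Rightarrow> bool" where
  "is_inner_line_inf x i j l \<longleftrightarrow>
     i \<noteq> j \<and> min i j > 0 \<and>
     (\<forall>k<l. x (i + k) = x (j + k)) \<and>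
     x (i - 1) \<noteq> x (j - 1) \<and> x (i + l) \<noteq> x (j + l)"

definition K_set :: "(nat \<Rightarrow> bool) \<Rightarrow> nat \<Rightarrow> (nat \<times> nat) set" where
  "K_set x l = {(i, j). is_inner_line_inf x i j l}"

definition asymp_density :: "(nat \<times> nat) set \<Rightarrow> real" where
  "asymp_density M = lim (\<lambda>n. real (card (M \<inter> ({..<n} \<times> {..<n}))) / real n ^ 2)"

end

theory Submission
  imports Defs
begin

(* Three properties of the fixed point x suffice. Every prefix of x recurs with bounded
   gaps (primitivity). Periodic runs of bounded period have bounded length: otherwise x,
   and with it every sequence of the subshift, would be periodic. Every word w has a
   frequency: the proportions of occurrences of w in the blocks zeta^N(0) and zeta^N(1) are,
   K levels higher, convex combinations of each other with weights in [q^-K, 1 - q^-K], up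
   to an error |w| / q^N, so they contract to a common limit.
   The inner lines of length l in the n x n plot correspond to pairs of occurrences of a word
   of length l + 2 and of the same word with flipped end letters, so their density tends to
   d(K_l); the lines of the finite plot differ from them only along the border. A point on a
   line of length at least 2h starts or ends a pair of agreeing windows of length h, and the
   bounded runs leave only O(n^2 / g) such pairs, so the tail of the sum is uniformly small.
   The limit is positive because the about n / R occurrences of the prefix of length l give
   about (n / R)^2 points on lines of length at least l. *)

section \<open>Substitutions of constant length\<close>

lemma funpow_subst_word:
  "(subst_word \<zeta> ^^ N) xs = concat (map (\<lambda>a. (subst_word \<zeta> ^^ N) [a]) xs)"
proof (induction N arbitrary: xs)
  case 0
  then show ?case by (induction xs) auto
next
  case (Suc N)
  have "(subst_word \<zeta> ^^ Suc N) xs = subst_word \<zeta> (concat (map (\<lambda>a. (subst_word \<zeta> ^^ N) [a]) xs))"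
    using Suc by (metis funpow.simps(2) o_apply)
  also have "\<dots> = concat (map (\<lambda>a. subst_word \<zeta> ((subst_word \<zeta> ^^ N) [a])) xs)"
    by (induction xs) (auto simp: subst_word_def)
  finally show ?case by simp
qed

lemma subst_iter_add:
  "subst_iter \<zeta> (N + k) a = concat (map (subst_iter \<zeta> N) (subst_iter \<zeta> k a))"
proof -
  have "subst_iter \<zeta> N = (\<lambda>a. (subst_word \<zeta> ^^ N) [a])"
    by (simp add: subst_iter_def fun_eq_iff)
  then show ?thesis
    by (simp add: subst_iter_def funpow_add, subst funpow_subst_word) simp
qed

lemma length_subst_word: "const_length \<zeta> q \<Longrightarrow> length (subst_word \<zeta> u) = q * length u"
  by (induction u) (auto simp: subst_word_def const_length_def)

lemma length_subst_iter: "const_length \<zeta> q \<Longrightarrow> length (subst_iter \<zeta> k a) = q ^ k"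
  by (induction k) (simp_all add: subst_iter_def length_subst_word)

lemma nth_concat_const_length:
  assumes "\<forall>y\<in>set xs. length (f y) = Q" and "t < length xs" and "r < Q"
  shows "concat (map f xs) ! (t * Q + r) = f (xs ! t) ! r"
  using assms
proof (induction xs arbitrary: t)
  case (Cons y xs)
  then show ?case
    by (cases t) (auto simp: nth_append add.assoc)
qed simp

lemma nth_subst_iter_add:
  assumes "const_length \<zeta> q" and "t < q ^ k" and "r < q ^ N"
  shows "subst_iter \<zeta> (N + k) a ! (t * q ^ N + r) = subst_iter \<zeta> N (subst_iter \<zeta> k a ! t) ! r"
  using assms by (simp add: subst_iter_add nth_concat_const_length length_subst_iter)

lemma fixed_point_block:
  assumes cl: "const_length \<zeta> q" and q: "q \<ge> 2" and fp: "is_fixed_point_of_0 \<zeta> x"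
    and r: "r < q ^ N"
  shows "x (t * q ^ N + r) = subst_iter \<zeta> N (x t) ! r"
proof -
  have "t < 2 ^ t" by (rule less_exp)
  also have "(2::nat) ^ t \<le> q ^ t" using q by (rule power_mono) simp
  finally have t: "t < q ^ t" .
  have "t * q ^ N + r < (t + 1) * q ^ N" using r by simp
  also have "\<dots> \<le> q ^ t * q ^ N" using t by (intro mult_right_mono) auto
  finally have lt: "t * q ^ N + r < q ^ (N + t)" by (simp add: power_add mult.commute)
  have "x (t * q ^ N + r) = subst_iter \<zeta> (N + t) False ! (t * q ^ N + r)"
    using fp lt cl by (simp add: is_fixed_point_of_0_def length_subst_iter)
  also have "\<dots> = subst_iter \<zeta> N (subst_iter \<zeta> t False ! t) ! r"
    using nth_subst_iter_add[OF cl t r] .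
  also have "subst_iter \<zeta> t False ! t = x t"
    using fp t cl by (simp add: is_fixed_point_of_0_def length_subst_iter)
  finally show ?thesis .
qed

section \<open>Occurrences of words in a sequence\<close>

definition occurs_at :: "(nat \<Rightarrow> 'a) \<Rightarrow> 'a list \<Rightarrow> nat \<Rightarrow> bool" where
  "occurs_at x w i \<longleftrightarrow> (\<forall>k<length w. x (i + k) = w ! k)"

definition hits :: "(nat \<Rightarrow> bool) \<Rightarrow> nat \<Rightarrow> nat \<Rightarrow> nat" where
  "hits P a L = (\<Sum>r<L. of_bool (P (a + r)))"

text \<open>Hits in the window \<open>[a, a + L)\<close> whose trailing segment of length \<open>m\<close> still fits
  into the window, i.e. occurrences of a word of length \<open>m\<close> lying inside the window.\<close>
definition hits_fitting :: "(nat \<Rightarrow> bool) \<Rightarrow> nat \<Rightarrow> nat \<Rightarrow> nat \<Rightarrow> nat" where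
  "hits_fitting P m a L = (\<Sum>r<L. of_bool (r + m \<le> L \<and> P (a + r)))"

definition occ_count :: "(nat \<Rightarrow> 'a) \<Rightarrow> 'a list \<Rightarrow> nat \<Rightarrow> nat" where
  "occ_count x w n = hits (occurs_at x w) 0 n"

definition has_word_frequencies :: "(nat \<Rightarrow> 'a) \<Rightarrow> bool" where
  "has_word_frequencies x \<longleftrightarrow> (\<forall>w. convergent (\<lambda>n. real (occ_count x w n) / real n))"

definition word_freq :: "(nat \<Rightarrow> 'a) \<Rightarrow> 'a list \<Rightarrow> real" where
  "word_freq x w = lim (\<lambda>n. real (occ_count x w n) / real n)"

definition periodic_runs_bounded :: "(nat \<Rightarrow> 'a) \<Rightarrow> bool" where
  "periodic_runs_bounded x \<longleftrightarrow>
     (\<forall>g. \<exists>h. \<forall>a p. 0 < p \<longrightarrow> p < g \<longrightarrow> \<not> (\<forall>k<h. x (a + k) = x (a + k + p)))"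

definition recurrent_prefix :: "(nat \<Rightarrow> 'a) \<Rightarrow> nat \<Rightarrow> bool" where
  "recurrent_prefix x m \<longleftrightarrow> (\<exists>R>0. \<forall>s. \<exists>i. s \<le> i \<and> i < s + R \<and> (\<forall>k<m. x (i + k) = x k))"

lemma sum_lessThan_add: "(\<Sum>r<L1 + L2. f r) = (\<Sum>r<L1. f r) + (\<Sum>r<L2. f (L1 + r :: nat))"
  by (induction L2) (simp_all add: add.assoc)

lemma hits_add: "hits P a (L1 + L2) = hits P a L1 + hits P (a + L1) L2"
  unfolding hits_def by (simp add: sum_lessThan_add add.assoc)

lemma hits_le: "hits P a L \<le> L"
  unfolding hits_def by (rule order_trans[OF sum_mono[of _ _ "\<lambda>_. 1"]]) auto

lemma hits_mono: "L1 \<le> L2 \<Longrightarrow> hits P a L1 \<le> hits P a L2"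
  using hits_add[of P a L1 "L2 - L1"] by simp

lemma hits_eq_card: "hits P 0 L = card {r. r < L \<and> P r}"
proof (induction L)
  case (Suc L)
  have "{r. r < Suc L \<and> P r} = (if P L then insert L {r. r < L \<and> P r} else {r. r < L \<and> P r})"
    by (auto simp: less_Suc_eq)
  then show ?case using Suc by (simp add: hits_def)
qed (simp add: hits_def)

lemma hits_diff_le: "hits P 0 (n - c) \<le> hits P 0 n \<and> hits P 0 n \<le> hits P 0 (n - c) + c"
proof -
  have "hits P 0 n = hits P 0 (n - c) + hits P (n - c) (n - (n - c))"
    using hits_add[of P 0 "n - c" "n - (n - c)"] by simp
  then show ?thesis using hits_le[of P "n - c" "n - (n - c)"] by linarith
qed

lemma hits_fitting_add: "hits_fitting P m a L1 + hits_fitting P m (a + L1) L2 \<le> hits_fitting P m a (L1 + L2)"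
proof -
  have "hits_fitting P m a (L1 + L2) = (\<Sum>r<L1. of_bool (r + m \<le> L1 + L2 \<and> P (a + r)))
      + (\<Sum>r<L2. of_bool (L1 + r + m \<le> L1 + L2 \<and> P (a + (L1 + r))))"
    unfolding hits_fitting_def by (rule sum_lessThan_add)
  moreover have "hits_fitting P m a L1 \<le> (\<Sum>r<L1. of_bool (r + m \<le> L1 + L2 \<and> P (a + r)))"
    unfolding hits_fitting_def by (intro sum_mono) auto
  moreover have "hits_fitting P m (a + L1) L2
      = (\<Sum>r<L2. of_bool (L1 + r + m \<le> L1 + L2 \<and> P (a + (L1 + r))))"
    unfolding hits_fitting_def by (intro sum.cong) (auto simp: add.assoc)
  ultimately show ?thesis by simp
qed

lemma hits_fitting_le_hits: "hits_fitting P m a L \<le> hits P a L"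
  unfolding hits_fitting_def hits_def by (intro sum_mono) auto

lemma hits_le_hits_fitting: "hits P a L \<le> hits_fitting P m a L + m"
proof (cases "m \<le> L")
  case True
  have "hits P a (L - m) = (\<Sum>r<L - m. of_bool (r + m \<le> L - m + m \<and> P (a + r)))"
    unfolding hits_def by (intro sum.cong) auto
  also have "\<dots> \<le> hits_fitting P m a ((L - m) + m)"
    unfolding hits_fitting_def sum_lessThan_add by simp
  finally have "hits P a (L - m) \<le> hits_fitting P m a L"
    using True by simp
  moreover have "hits P a L = hits P a (L - m) + hits P (a + (L - m)) m"
    using True hits_add[of P a "L - m" m] by simp
  ultimately show ?thesis using hits_le[of P "a + (L - m)" m] by linarith
next
  case False
  then show ?thesis using hits_le[of P a L] by simp
qed

lemma sum_hits_fitting_le: "(\<Sum>s<T. hits_fitting P m (a + s * Q) Q) \<le> hits_fitting P m a (T * Q)"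
proof (induction T)
  case (Suc T)
  then have "(\<Sum>s<Suc T. hits_fitting P m (a + s * Q) Q)
      \<le> hits_fitting P m a (T * Q) + hits_fitting P m (a + T * Q) Q" by simp
  also have "\<dots> \<le> hits_fitting P m a (T * Q + Q)" by (rule hits_fitting_add)
  finally show ?case by (simp add: add.commute)
qed simp

lemma hits_le_sum_hits_fitting: "hits P a (T * Q) \<le> (\<Sum>s<T. hits_fitting P m (a + s * Q) Q) + T * m"
proof (induction T)
  case (Suc T)
  have "hits P a (Suc T * Q) = hits P a (T * Q) + hits P (a + T * Q) Q"
    using hits_add[of P a "T * Q" Q] by (simp add: add.commute)
  then show ?case
    using Suc hits_le_hits_fitting[of P "a + T * Q" Q m] by simp
qed (simp add: hits_def)

lemma periodic_if_long_periodic_runs: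
  assumes rec: "\<And>m. recurrent_prefix x m"
    and runs: "\<And>h. \<exists>a. \<forall>k<h. x (a + k) = x (a + k + p)"
  shows "x i = x (i + p)"
proof -
  obtain R where "R > 0" and R: "\<And>s. \<exists>b. s \<le> b \<and> b < s + R \<and> (\<forall>k<i + p + 1. x (b + k) = x k)"
    using rec[of "i + p + 1"] by (auto simp: recurrent_prefix_def)
  obtain a where a: "\<forall>k<R + i + p + 1. x (a + k) = x (a + k + p)"
    using runs by blast
  obtain b where b: "a \<le> b" "b < a + R" "\<forall>k<i + p + 1. x (b + k) = x k"
    using R by blast
  have "b - a + i < R + i + p + 1"
    using b by simp
  then have "x (a + (b - a + i)) = x (a + (b - a + i) + p)"
    using a by blast
  then have "x (b + i) = x (b + (i + p))"
    using b by (simp add: add.assoc)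
  then show ?thesis
    using b(3) by simp
qed

lemma periodic_runs_boundedI:
  assumes "\<And>p. 0 < p \<Longrightarrow> \<exists>h. \<forall>a. \<not> (\<forall>k<h. x (a + k) = x (a + k + p))"
  shows "periodic_runs_bounded x"
  unfolding periodic_runs_bounded_def
proof
  fix g
  obtain H where H: "\<And>p a. 0 < p \<Longrightarrow> \<not> (\<forall>k<H p. x (a + k) = x (a + k + p))"
    using assms by metis
  have "H p \<le> (\<Sum>p'<g. H p')" if "p < g" for p
    using that by (intro member_le_sum) auto
  then show "\<exists>h. \<forall>a p. 0 < p \<longrightarrow> p < g \<longrightarrow> \<not> (\<forall>k<h. x (a + k) = x (a + k + p))"
    using H by (metis order_less_le_trans)
qed

lemma common_limit_of_contracting_pair:
  fixes u v E :: "nat \<Rightarrow> real" and c :: real and K :: nat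
  assumes bounds: "\<And>N. 0 \<le> u N" "\<And>N. u N \<le> 1" "\<And>N. 0 \<le> v N" "\<And>N. v N \<le> 1"
    and min_mono: "\<And>N. min (u N) (v N) \<le> min (u (Suc N)) (v (Suc N))"
    and max_mono: "\<And>N. max (u (Suc N)) (v (Suc N)) \<le> max (u N) (v N) + E N"
    and E: "\<And>N. 0 \<le> E N" "\<And>N. 2 * E (Suc N) \<le> E N" "E \<longlonglongrightarrow> 0"
    and c: "0 \<le> c" "c < 1"
    and contract: "\<And>N. \<bar>u (N + K) - v (N + K)\<bar> \<le> c * \<bar>u N - v N\<bar> + E N"
  shows "\<exists>A. u \<longlonglongrightarrow> A \<and> v \<longlonglongrightarrow> A"
proof -
  define m where "m N = min (u N) (v N)" for N
  define M where "M N = max (u N) (v N) + 2 * E N" for N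
  have "incseq m" by (rule incseq_SucI) (use min_mono in \<open>simp add: m_def\<close>)
  moreover have "\<forall>i. m i \<le> 1" using bounds by (simp add: m_def min_le_iff_disj)
  ultimately obtain A where A: "m \<longlonglongrightarrow> A" by (rule incseq_convergent)
  \<comment> \<open>the slack \<open>2 E N\<close> makes the upper envelope monotone\<close>
  have "decseq M"
    by (rule decseq_SucI) (use max_mono E in \<open>smt (verit) M_def\<close>)
  moreover have "\<forall>i. 0 \<le> M i" using bounds E by (simp add: M_def le_max_iff_disj)
  ultimately obtain B where B: "M \<longlonglongrightarrow> B" by (rule decseq_convergent)
  have "(\<lambda>N. M N - 2 * E N) \<longlonglongrightarrow> B - 2 * 0" by (intro tendsto_intros B E)
  then have max_lim: "(\<lambda>N. max (u N) (v N)) \<longlonglongrightarrow> B" by (simp add: M_def)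
  have "(\<lambda>N. max (u N) (v N) - m N) \<longlonglongrightarrow> B - A" by (intro tendsto_intros max_lim A)
  moreover have "max (u N) (v N) - m N = \<bar>u N - v N\<bar>" for N by (simp add: m_def abs_if)
  ultimately have diff: "(\<lambda>N. \<bar>u N - v N\<bar>) \<longlonglongrightarrow> B - A" by simp
  have "(\<lambda>N. \<bar>u (N + K) - v (N + K)\<bar>) \<longlonglongrightarrow> B - A"
    using LIMSEQ_ignore_initial_segment[OF diff, of K] by simp
  moreover have "(\<lambda>N. c * \<bar>u N - v N\<bar> + E N) \<longlonglongrightarrow> c * (B - A) + 0"
    by (intro tendsto_intros diff E)
  ultimately have "B - A \<le> c * (B - A)"
    using contract by (auto intro: LIMSEQ_le)
  then have "B \<le> A" using c by (simp add: mult_le_cancel_right1)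
  moreover have "A \<le> B" by (rule LIMSEQ_le[OF A max_lim]) (auto simp: m_def)
  ultimately have "B = A" by simp
  then have "u \<longlonglongrightarrow> A" "v \<longlonglongrightarrow> A"
    by (auto intro!: tendsto_sandwich[OF _ _ A max_lim[unfolded \<open>B = A\<close>]] simp: m_def)
  then show ?thesis by blast
qed

lemma tendsto_if_uniform_approximations:
  fixes a :: "nat \<Rightarrow> real"
  assumes approx: "\<And>N n. n > 0 \<Longrightarrow> \<bar>a n - A\<bar> \<le> e N + C N / real n" and e: "e \<longlonglongrightarrow> 0"
  shows "a \<longlonglongrightarrow> A"
proof (rule LIMSEQ_I)
  fix \<epsilon> :: real assume "\<epsilon> > 0"
  then obtain N where N: "\<bar>e N\<bar> < \<epsilon> / 2"
    using LIMSEQ_D[OF e, of "\<epsilon> / 2"] by auto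
  obtain n0 where n0: "\<forall>n\<ge>n0. \<bar>C N / real n\<bar> < \<epsilon> / 2"
    using LIMSEQ_D[OF lim_const_over_n[of "C N"], of "\<epsilon> / 2"] \<open>\<epsilon> > 0\<close> by auto
  have "\<bar>a n - A\<bar> < \<epsilon>" if "n \<ge> max n0 1" for n
  proof -
    have "\<bar>a n - A\<bar> \<le> e N + C N / real n" using approx[of n N] that by simp
    moreover have "\<bar>C N / real n\<bar> < \<epsilon> / 2" using n0 that by simp
    ultimately show ?thesis using N by linarith
  qed
  then show "\<exists>n0. \<forall>n\<ge>n0. norm (a n - A) < \<epsilon>" by (metis real_norm_def)
qed

lemma tendsto_if_squeezed_by_approximants:
  fixes b :: "nat \<Rightarrow> real" and a :: "nat \<Rightarrow> nat \<Rightarrow> real"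
  assumes a: "\<And>K. a K \<longlonglongrightarrow> P K" and P: "P \<longlonglongrightarrow> S"
    and below: "\<And>K n. a K n \<le> b n"
    and above: "\<And>\<epsilon>. \<epsilon> > 0 \<Longrightarrow> \<exists>K0. \<forall>K\<ge>K0. eventually (\<lambda>n. b n \<le> a K n + \<epsilon>) sequentially"
  shows "b \<longlonglongrightarrow> S"
proof (rule LIMSEQ_I)
  fix \<epsilon> :: real assume "\<epsilon> > 0"
  then obtain K0 where K0: "\<forall>K\<ge>K0. eventually (\<lambda>n. b n \<le> a K n + \<epsilon> / 3) sequentially"
    using above[of "\<epsilon> / 3"] by auto
  obtain K1 where K1: "\<forall>K\<ge>K1. norm (P K - S) < \<epsilon> / 3"
    using LIMSEQ_D[OF P] \<open>\<epsilon> > 0\<close> by (meson divide_pos_pos zero_less_numeral)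
  define K where "K = max K0 K1"
  have "eventually (\<lambda>n. b n \<le> a K n + \<epsilon> / 3) sequentially"
    using K0 by (simp add: K_def)
  moreover have "eventually (\<lambda>n. \<bar>a K n - P K\<bar> < \<epsilon> / 3) sequentially"
    using a[of K, unfolded tendsto_iff, rule_format, of "\<epsilon> / 3"] \<open>\<epsilon> > 0\<close>
    by (simp add: dist_real_def)
  ultimately have "eventually (\<lambda>n. \<bar>b n - S\<bar> < \<epsilon>) sequentially"
  proof eventually_elim
    case (elim n)
    have "\<bar>P K - S\<bar> < \<epsilon> / 3" using K1 by (simp add: K_def)
    then show ?case using elim below[of K n] by linarith
  qed
  then show "\<exists>n0. \<forall>n\<ge>n0. norm (b n - S) < \<epsilon>"
    by (simp add: eventually_sequentially)
qed

section \<open>The fixed point of a primitive aperiodic substitution\<close>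

lemma sum_list_map_bool:
  fixes f :: "bool \<Rightarrow> real"
  shows "sum_list (map f u) = real (count_list u False) * f False + real (count_list u True) * f True"
  by (induction u) (auto simp: algebra_simps)

lemma count_list_bool: "count_list u False + count_list u True = length u"
  by (induction u) auto

lemma convex_combination_between:
  fixes u v \<alpha> :: real
  assumes "0 \<le> \<alpha>" "\<alpha> \<le> 1"
  shows "min u v \<le> \<alpha> * u + (1 - \<alpha>) * v" and "\<alpha> * u + (1 - \<alpha>) * v \<le> max u v"
proof -
  have "\<alpha> * min u v + (1 - \<alpha>) * min u v \<le> \<alpha> * u + (1 - \<alpha>) * v"
    using assms by (intro add_mono mult_left_mono) auto
  then show "min u v \<le> \<alpha> * u + (1 - \<alpha>) * v" by (simp add: algebra_simps)
  have "\<alpha> * u + (1 - \<alpha>) * v \<le> \<alpha> * max u v + (1 - \<alpha>) * max u v"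
    using assms by (intro add_mono mult_left_mono) auto
  then show "\<alpha> * u + (1 - \<alpha>) * v \<le> max u v" by (simp add: algebra_simps)
qed

locale subst_fixed_point =
  fixes \<zeta> :: "bool \<Rightarrow> bool list" and q :: nat and x :: "nat \<Rightarrow> bool"
  assumes q_ge_2: "q \<ge> 2" and const_len: "const_length \<zeta> q"
    and primitive: "primitive_subst \<zeta>" and aperiodic: "aperiodic_subst \<zeta>"
    and fixed_point: "is_fixed_point_of_0 \<zeta> x"
begin

lemma q_pos: "q > 0"
  using q_ge_2 by simp

lemma block: "r < q ^ N \<Longrightarrow> x (t * q ^ N + r) = subst_iter \<zeta> N (x t) ! r"
  using fixed_point_block[OF const_len q_ge_2 fixed_point] .

lemma fixed_point_0: "x 0 = False"
  using fixed_point[unfolded is_fixed_point_of_0_def, rule_format, of 0 0]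
  by (simp add: subst_iter_def)

lemma block_of_0: "x u = False \<Longrightarrow> r < q ^ N \<Longrightarrow> x (u * q ^ N + r) = x r"
  using block[of r N u] block[of r N 0] fixed_point_0 by simp

lemma letter_in_block:
  assumes "\<forall>a b. b \<in> set (subst_iter \<zeta> K a)"
  shows "\<exists>s<q ^ K. x (t * q ^ K + s) = b"
proof -
  obtain s where "s < length (subst_iter \<zeta> K (x t))" and "subst_iter \<zeta> K (x t) ! s = b"
    using assms by (metis in_set_conv_nth)
  then show ?thesis
    using block length_subst_iter[OF const_len] by metis
qed

text \<open>Every block \<open>\<zeta>\<^sup>K(a)\<close> contains a \<open>0\<close>, and the block of level \<open>m\<close> grown from that \<open>0\<close>
  starts with the prefix of length \<open>m \<le> q\<^sup>m\<close>; so the prefix recurs in every window of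
  length \<open>2 q\<^sup>K\<^sup>+\<^sup>m\<close>.\<close>
lemma recurrent_prefix_fixed_point: "recurrent_prefix x m"
proof -
  obtain K where K: "\<forall>a b. b \<in> set (subst_iter \<zeta> K a)"
    using primitive unfolding primitive_subst_def by blast
  have "m < 2 ^ m" by (rule less_exp)
  also have "(2::nat) ^ m \<le> q ^ m" using q_ge_2 by (rule power_mono) simp
  finally have m: "m \<le> q ^ m" by simp
  define Q where "Q = q ^ (K + m)"
  have "\<exists>i. s \<le> i \<and> i < s + 2 * Q \<and> (\<forall>k<m. x (i + k) = x k)" for s
  proof -
    define t where "t = s div Q + 1"
    obtain s' where s': "s' < q ^ K" "x (t * q ^ K + s') = False"
      using letter_in_block[OF K] by blast
    define i where "i = (t * q ^ K + s') * q ^ m"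
    have "\<forall>k<m. x (i + k) = x k"
      using block_of_0[OF s'(2)] m by (simp add: i_def)
    moreover have i: "i = t * Q + s' * q ^ m"
      by (simp add: i_def Q_def power_add algebra_simps)
    have "s' * q ^ m < Q"
      using s'(1) q_pos by (simp add: Q_def power_add)
    moreover have "s < t * Q" "t * Q \<le> s + Q"
    proof -
      have "t * Q = s div Q * Q + Q" by (simp add: t_def)
      moreover have "s mod Q < Q" using q_pos by (simp add: Q_def)
      ultimately show "s < t * Q" "t * Q \<le> s + Q"
        using div_mult_mod_eq[of s Q] by linarith+
    qed
    ultimately show ?thesis
      using i by (intro exI[of _ i]) auto
  qed
  moreover have "2 * Q > 0" using q_pos by (simp add: Q_def)
  ultimately show ?thesis
    unfolding recurrent_prefix_def by blast
qed

lemma language_occurs_in_fixed_point: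
  assumes "w \<in> subst_language \<zeta>"
  shows "\<exists>c. \<forall>j<length w. w ! j = x (c + j)"
proof -
  obtain k a u1 u2 where v: "subst_iter \<zeta> k a = u1 @ w @ u2"
    using assms by (auto simp: subst_language_def is_factor_def)
  obtain K where "\<forall>a b. b \<in> set (subst_iter \<zeta> K a)"
    using primitive unfolding primitive_subst_def by blast
  then obtain s where s: "x (0 * q ^ K + s) = a" using letter_in_block by blast
  have len: "length u1 + length w + length u2 = q ^ k"
    using arg_cong[OF v, of length] length_subst_iter[OF const_len] by simp
  have "w ! j = x (s * q ^ k + length u1 + j)" if "j < length w" for j
  proof -
    have "x (s * q ^ k + (length u1 + j)) = subst_iter \<zeta> k a ! (length u1 + j)"
      using block[of "length u1 + j" k s] len that s by simp
    then show ?thesis using v that by (simp add: nth_append add.assoc)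
  qed
  then show ?thesis by blast
qed

lemma fixed_point_not_periodic:
  assumes "p > 0"
  shows "\<not> (\<forall>i. x i = x (i + p))"
proof
  assume per: "\<forall>i. x i = x (i + p)"
  obtain y where y: "y \<in> subshift \<zeta>" "\<not> shift_periodic y"
    using aperiodic by (auto simp: aperiodic_subst_def)
  have "y (i + p) = y i" for i
  proof -
    let ?w = "map y [i..<i + (p + 1)]"
    obtain c where c: "\<forall>j<length ?w. ?w ! j = x (c + j)"
      using y(1) language_occurs_in_fixed_point unfolding subshift_def by blast
    have "y (i + j) = x (c + j)" if "j \<le> p" for j
      using c[rule_format, of j] that by (simp del: upt_Suc add: nth_map_upt)
    from this[of 0] this[of p] show ?thesis using per[rule_format, of c] by simp
  qed
  then show False
    using y(2) assms unfolding shift_periodic_def by blast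
qed

lemma periodic_runs_bounded_fixed_point: "periodic_runs_bounded x"
proof (rule periodic_runs_boundedI, rule ccontr)
  fix p :: nat
  assume "0 < p" and "\<nexists>h. \<forall>a. \<not> (\<forall>k<h. x (a + k) = x (a + k + p))"
  then have "\<exists>a. \<forall>k<h. x (a + k) = x (a + k + p)" for h
    by blast
  then have "\<forall>i. x i = x (i + p)"
    using periodic_if_long_periodic_runs[OF recurrent_prefix_fixed_point] by metis
  with fixed_point_not_periodic[OF \<open>0 < p\<close>] show False ..
qed

definition block_occ_count :: "bool list \<Rightarrow> nat \<Rightarrow> bool \<Rightarrow> nat" where
  "block_occ_count w N b = hits_fitting (occurs_at ((!) (subst_iter \<zeta> N b)) w) (length w) 0 (q ^ N)"

definition block_occ_freq :: "bool list \<Rightarrow> nat \<Rightarrow> bool \<Rightarrow> real" where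
  "block_occ_freq w N b = real (block_occ_count w N b) / real q ^ N"

definition zeros_share :: "nat \<Rightarrow> bool \<Rightarrow> real" where
  "zeros_share K b = real (count_list (subst_iter \<zeta> K b) False) / real q ^ K"

lemma hits_fitting_block:
  "hits_fitting (occurs_at x w) (length w) (t * q ^ N) (q ^ N) = block_occ_count w N (x t)"
  unfolding block_occ_count_def hits_fitting_def
proof (intro sum.cong refl)
  fix r
  have "occurs_at x w (t * q ^ N + r) \<longleftrightarrow> occurs_at ((!) (subst_iter \<zeta> N (x t))) w r"
    if "r + length w \<le> q ^ N"
    using that block[of "r + _" N t] by (auto simp: occurs_at_def add.assoc)
  then show "of_bool (r + length w \<le> q ^ N \<and> occurs_at x w (t * q ^ N + r))
      = of_bool (r + length w \<le> q ^ N \<and> occurs_at ((!) (subst_iter \<zeta> N (x t))) w (0 + r))"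
    by auto
qed

lemma block_occ_freq_bounds: "0 \<le> block_occ_freq w N b" "block_occ_freq w N b \<le> 1"
proof -
  have "block_occ_count w N b \<le> q ^ N"
    unfolding block_occ_count_def using hits_fitting_le_hits hits_le order_trans by blast
  then show "0 \<le> block_occ_freq w N b" "block_occ_freq w N b \<le> 1"
    using q_pos by (auto simp: block_occ_freq_def divide_le_eq_1)
qed

lemma letter_occurs: "\<exists>t. x t = b"
proof -
  obtain K where "\<forall>a b. b \<in> set (subst_iter \<zeta> K a)"
    using primitive unfolding primitive_subst_def by blast
  then show ?thesis using letter_in_block[of K 0 b] by blast
qed

lemma sum_block_occ_count:
  "(\<Sum>s<q ^ K. real (block_occ_count w N (subst_iter \<zeta> K b ! s)))
     = real q ^ K * (zeros_share K b * real (block_occ_count w N False)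
                     + (1 - zeros_share K b) * real (block_occ_count w N True))"
proof -
  let ?u = "subst_iter \<zeta> K b"
  have len: "length ?u = q ^ K" by (simp add: length_subst_iter[OF const_len])
  then have "(\<Sum>s<q ^ K. real (block_occ_count w N (?u ! s)))
      = real (count_list ?u False) * real (block_occ_count w N False)
        + real (count_list ?u True) * real (block_occ_count w N True)"
    using sum_list_map_bool[of "\<lambda>c. real (block_occ_count w N c)" ?u]
    by (simp add: sum_list_sum_nth atLeast0LessThan)
  also have "real (count_list ?u True) = real q ^ K - real (count_list ?u False)"
    using count_list_bool[of ?u] len by (metis add_diff_cancel_left' of_nat_add of_nat_power)
  also have "real (count_list ?u False) * real (block_occ_count w N False)
        + (real q ^ K - real (count_list ?u False)) * real (block_occ_count w N True)
      = real q ^ K * (zeros_share K b * real (block_occ_count w N False)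
                      + (1 - zeros_share K b) * real (block_occ_count w N True))"
    using q_pos by (simp add: zeros_share_def field_simps)
  finally show ?thesis .
qed

lemma block_occ_count_split:
  "(\<Sum>s<q ^ K. block_occ_count w N (subst_iter \<zeta> K b ! s)) \<le> block_occ_count w (N + K) b"
  "block_occ_count w (N + K) b
     \<le> (\<Sum>s<q ^ K. block_occ_count w N (subst_iter \<zeta> K b ! s)) + q ^ K * length w"
proof -
  obtain t where t: "x t = b" using letter_occurs by blast
  let ?P = "occurs_at x w" and ?a = "t * q ^ (N + K)"
  have whole: "block_occ_count w (N + K) b = hits_fitting ?P (length w) ?a (q ^ K * q ^ N)"
    using hits_fitting_block[of w t "N + K"] t by (simp add: power_add mult.commute)
  have "hits_fitting ?P (length w) (?a + s * q ^ N) (q ^ N) = block_occ_count w N (subst_iter \<zeta> K b ! s)"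
    if "s < q ^ K" for s
  proof -
    have "?a + s * q ^ N = (t * q ^ K + s) * q ^ N" by (simp add: power_add algebra_simps)
    then show ?thesis
      using hits_fitting_block[of w "t * q ^ K + s" N] block[OF that, of t] t by simp
  qed
  then have parts: "(\<Sum>s<q ^ K. hits_fitting ?P (length w) (?a + s * q ^ N) (q ^ N))
      = (\<Sum>s<q ^ K. block_occ_count w N (subst_iter \<zeta> K b ! s))"
    by (intro sum.cong) auto
  show "(\<Sum>s<q ^ K. block_occ_count w N (subst_iter \<zeta> K b ! s)) \<le> block_occ_count w (N + K) b"
    using sum_hits_fitting_le[of ?P "length w" ?a "q ^ N" "q ^ K"] whole parts by simp
  show "block_occ_count w (N + K) b
     \<le> (\<Sum>s<q ^ K. block_occ_count w N (subst_iter \<zeta> K b ! s)) + q ^ K * length w"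
    using hits_le_sum_hits_fitting[of ?P ?a "q ^ K" "q ^ N" "length w"]
      hits_fitting_le_hits[of ?P "length w" ?a "q ^ K * q ^ N"] whole parts by simp
qed

lemma zeros_share_bounds: "0 \<le> zeros_share K b" "zeros_share K b \<le> 1"
proof -
  have "count_list (subst_iter \<zeta> K b) False \<le> q ^ K"
    using count_list_bool[of "subst_iter \<zeta> K b"] length_subst_iter[OF const_len] by simp
  then show "0 \<le> zeros_share K b" "zeros_share K b \<le> 1"
    using q_pos by (auto simp: zeros_share_def divide_le_eq_1 simp flip: of_nat_power)
qed

lemma zeros_share_primitive:
  assumes "\<forall>a c. c \<in> set (subst_iter \<zeta> K a)"
  shows "1 / real q ^ K \<le> zeros_share K b" and "zeros_share K b \<le> 1 - 1 / real q ^ K"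
proof -
  let ?u = "subst_iter \<zeta> K b"
  have "count_list ?u False \<ge> 1" "count_list ?u True \<ge> 1"
    using assms count_list_0_iff[of ?u] by (metis less_one not_le)+
  then have "1 \<le> count_list ?u False" "count_list ?u False + 1 \<le> q ^ K"
    using count_list_bool[of ?u] length_subst_iter[OF const_len] by simp_all
  then have "1 \<le> real (count_list ?u False)" "real (count_list ?u False) + 1 \<le> real q ^ K"
    by (metis of_nat_1 of_nat_add of_nat_le_iff of_nat_power)+
  then show "1 / real q ^ K \<le> zeros_share K b" "zeros_share K b \<le> 1 - 1 / real q ^ K"
    using q_pos unfolding zeros_share_def by (simp_all add: field_simps)
qed

text \<open>Cutting \<open>\<zeta>\<^sup>N\<^sup>+\<^sup>K(b)\<close> into the blocks \<open>\<zeta>\<^sup>N(c)\<close>, \<open>c\<close> a letter of \<open>\<zeta>\<^sup>K(b)\<close>, only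
  the occurrences straddling two blocks are lost.\<close>
lemma block_occ_freq_split:
  "\<exists>e. 0 \<le> e \<and> e \<le> real (length w) / real q ^ N \<and>
     block_occ_freq w (N + K) b = zeros_share K b * block_occ_freq w N False
                                  + (1 - zeros_share K b) * block_occ_freq w N True + e"
proof -
  define S where "S = (\<Sum>s<q ^ K. block_occ_count w N (subst_iter \<zeta> K b ! s))"
  define e where "e = (real (block_occ_count w (N + K) b) - real S) / real q ^ (N + K)"
  have qN: "real q ^ N > 0" "real q ^ K > 0" using q_pos by simp_all
  have "block_occ_count w (N + K) b \<le> S + q ^ K * length w" "S \<le> block_occ_count w (N + K) b"
    using block_occ_count_split[where K = K and w = w and N = N and b = b] by (simp_all add: S_def)
  then have "real (block_occ_count w (N + K) b) \<le> real S + real q ^ K * real (length w)"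
    and "0 \<le> e"
    by (simp_all add: e_def flip: of_nat_le_iff of_nat_power of_nat_mult of_nat_add)
  then have "e \<le> real q ^ K * real (length w) / real q ^ (N + K)"
    unfolding e_def using qN by (intro divide_right_mono) auto
  also have "\<dots> = real (length w) / real q ^ N"
    using qN by (simp add: power_add)
  finally have "e \<le> real (length w) / real q ^ N" .
  moreover have "block_occ_freq w (N + K) b = real S / real q ^ (N + K) + e"
    by (simp add: block_occ_freq_def e_def diff_divide_distrib)
  moreover have "real S / real q ^ (N + K) = zeros_share K b * block_occ_freq w N False
                                            + (1 - zeros_share K b) * block_occ_freq w N True"
    using sum_block_occ_count[where K = K and w = w and N = N and b = b] qN
    by (simp add: S_def power_add block_occ_freq_def field_simps)
  ultimately show ?thesis using \<open>0 \<le> e\<close> by auto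
qed

lemma block_occ_freq_step:
  "min (block_occ_freq w N False) (block_occ_freq w N True) \<le> block_occ_freq w (Suc N) b"
  "block_occ_freq w (Suc N) b
     \<le> max (block_occ_freq w N False) (block_occ_freq w N True) + real (length w) / real q ^ N"
  using block_occ_freq_split[where K = 1 and w = w and N = N and b = b]
    convex_combination_between[OF zeros_share_bounds[where K = 1 and b = b],
      of "block_occ_freq w N False" "block_occ_freq w N True"]
  by auto

lemma block_occ_freq_contract:
  assumes "\<forall>a c. c \<in> set (subst_iter \<zeta> K a)"
  shows "\<bar>block_occ_freq w (N + K) False - block_occ_freq w (N + K) True\<bar>
     \<le> (1 - 2 / real q ^ K) * \<bar>block_occ_freq w N False - block_occ_freq w N True\<bar>
       + real (length w) / real q ^ N"
proof -
  let ?d = "block_occ_freq w N False - block_occ_freq w N True"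
  obtain e0 e1 where e: "0 \<le> e0" "e0 \<le> real (length w) / real q ^ N"
      "0 \<le> e1" "e1 \<le> real (length w) / real q ^ N"
    and "block_occ_freq w (N + K) False - block_occ_freq w (N + K) True
      = (zeros_share K False - zeros_share K True) * ?d + (e0 - e1)"
    using block_occ_freq_split[where K = K and w = w and N = N and b = False]
      block_occ_freq_split[where K = K and w = w and N = N and b = True]
    by (auto simp: algebra_simps)
  moreover have "\<bar>zeros_share K False - zeros_share K True\<bar> \<le> 1 - 2 / real q ^ K"
    using zeros_share_primitive[OF assms, of False] zeros_share_primitive[OF assms, of True]
    by (simp add: abs_le_iff)
  then have "\<bar>(zeros_share K False - zeros_share K True) * ?d\<bar> \<le> (1 - 2 / real q ^ K) * \<bar>?d\<bar>"
    unfolding abs_mult by (intro mult_right_mono) auto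
  ultimately show ?thesis
    using abs_triangle_ineq[of "(zeros_share K False - zeros_share K True) * ?d" "e0 - e1"]
    by (simp add: abs_le_iff)
qed

lemma block_occ_freq_converges:
  "\<exists>A. (\<lambda>N. block_occ_freq w N False) \<longlonglongrightarrow> A \<and> (\<lambda>N. block_occ_freq w N True) \<longlonglongrightarrow> A"
proof -
  obtain K where "K \<ge> 1" and K: "\<forall>a b. b \<in> set (subst_iter \<zeta> K a)"
    using primitive unfolding primitive_subst_def by blast
  define E where "E N = real (length w) / real q ^ N" for N
  have "real q \<le> real q ^ K"
    using power_increasing[OF \<open>K \<ge> 1\<close>, of "real q"] q_ge_2 by (simp only: power_one_right)
  then have "2 \<le> real q ^ K"
    using q_ge_2 by linarith
  then have c: "0 \<le> 1 - 2 / real q ^ K" "1 - 2 / real q ^ K < 1"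
    using q_pos by (auto simp: field_simps)
  have "E \<longlonglongrightarrow> 0"
    unfolding E_def using q_ge_2 by (intro LIMSEQ_divide_realpow_zero) auto
  moreover have "2 * E (Suc N) \<le> E N" for N
  proof -
    have "real (length w) * 2 \<le> real (length w) * real q"
      using q_ge_2 by (intro mult_left_mono) auto
    then show ?thesis
      using q_pos by (simp add: E_def field_simps mult.commute)
  qed
  ultimately show ?thesis
    using block_occ_freq_bounds block_occ_freq_step block_occ_freq_contract[OF K] c
    by (intro common_limit_of_contracting_pair[where E = E and c = "1 - 2 / real q ^ K" and K = K])
      (auto simp: E_def min_le_iff_disj)
qed

lemma occ_count_block_bounds:
  "(\<Sum>t<n div q ^ N. block_occ_count w N (x t)) \<le> occ_count x w n"
  "occ_count x w n \<le> (\<Sum>t<n div q ^ N. block_occ_count w N (x t)) + n div q ^ N * length w + q ^ N"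
proof -
  let ?P = "occurs_at x w" and ?Q = "q ^ N" and ?T = "n div q ^ N"
  have TQ: "?T * ?Q \<le> n" and rest: "n - ?T * ?Q \<le> ?Q"
    using q_pos by (simp_all add: div_times_less_eq_dividend minus_div_mult_eq_mod)
  have blocks: "(\<Sum>s<?T. hits_fitting ?P (length w) (0 + s * ?Q) ?Q) = (\<Sum>t<?T. block_occ_count w N (x t))"
    using hits_fitting_block by simp
  show "(\<Sum>t<?T. block_occ_count w N (x t)) \<le> occ_count x w n"
    using sum_hits_fitting_le[of ?P "length w" 0 ?Q ?T] hits_fitting_le_hits hits_mono[OF TQ] blocks
    unfolding occ_count_def by (metis order_trans)
  have "occ_count x w n = hits ?P 0 (?T * ?Q) + hits ?P (?T * ?Q) (n - ?T * ?Q)"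
    using hits_add[of ?P 0 "?T * ?Q" "n - ?T * ?Q"] TQ by (simp add: occ_count_def)
  then show "occ_count x w n \<le> (\<Sum>t<?T. block_occ_count w N (x t)) + ?T * length w + ?Q"
    using hits_le_sum_hits_fitting[of ?P 0 ?T ?Q "length w"] hits_le[of ?P "?T * ?Q" "n - ?T * ?Q"]
      rest blocks by linarith
qed

lemma occ_count_approx:
  assumes "n > 0"
  shows "\<bar>real (occ_count x w n) / real n - A\<bar>
    \<le> (\<bar>block_occ_freq w N False - A\<bar> + \<bar>block_occ_freq w N True - A\<bar> + real (length w) / real q ^ N)
      + real q ^ N * (\<bar>A\<bar> + 1) / real n"
proof -
  define Q where "Q = real q ^ N"
  define T where "T = n div q ^ N"
  define S where "S = (\<Sum>t<T. real (block_occ_count w N (x t)))"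
  define \<delta> where "\<delta> = \<bar>block_occ_freq w N False - A\<bar> + \<bar>block_occ_freq w N True - A\<bar>"
  have Q: "Q > 0" using q_pos by (simp add: Q_def)
  have cnt: "S \<le> real (occ_count x w n)" "real (occ_count x w n) \<le> S + real T * real (length w) + Q"
    using occ_count_block_bounds[where n = n and N = N and w = w] unfolding S_def T_def Q_def
    by (simp_all flip: of_nat_sum of_nat_le_iff of_nat_power of_nat_mult of_nat_add)
  have "n mod q ^ N < q ^ N"
    using q_pos by simp
  then have "real (T * q ^ N) \<le> real n" "real n < real (T * q ^ N + q ^ N)"
    using div_mult_mod_eq[of n "q ^ N"] unfolding T_def of_nat_le_iff of_nat_less_iff by linarith+
  then have TQ: "real T * Q \<le> real n" "real n < real T * Q + Q"
    by (simp_all add: Q_def)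
  have "\<bar>real (block_occ_count w N b) - Q * A\<bar> \<le> Q * \<delta>" for b
  proof -
    have "real (block_occ_count w N b) - Q * A = Q * (block_occ_freq w N b - A)"
      using Q by (simp add: block_occ_freq_def Q_def field_simps)
    then show ?thesis
      using Q by (cases b) (simp_all add: abs_mult \<delta>_def)
  qed
  then have "\<bar>S - real T * Q * A\<bar> \<le> real T * Q * \<delta>"
    unfolding S_def using sum_abs[of "\<lambda>t. real (block_occ_count w N (x t)) - Q * A" "{..<T}"]
      sum_mono[of "{..<T}" "\<lambda>t. \<bar>real (block_occ_count w N (x t)) - Q * A\<bar>" "\<lambda>_. Q * \<delta>"]
    by (simp add: sum_subtractf)
  moreover have "real T * Q * \<delta> \<le> real n * \<delta>"
    using TQ by (intro mult_right_mono) (auto simp: \<delta>_def)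
  moreover have "real T * Q * real (length w) \<le> real n * real (length w)"
    using TQ by (intro mult_right_mono) auto
  then have "real T * real (length w) \<le> real n * (real (length w) / Q)"
    using Q by (simp add: field_simps)
  moreover have "\<bar>(real T * Q - real n) * A\<bar> \<le> Q * \<bar>A\<bar>"
    using TQ by (simp add: abs_mult mult_right_mono)
  ultimately have "\<bar>real (occ_count x w n) - real n * A\<bar> \<le> real n * (\<delta> + real (length w) / Q) + Q * (\<bar>A\<bar> + 1)"
    using cnt by (simp add: abs_le_iff algebra_simps)
  then show ?thesis
    using assms by (simp add: \<delta>_def Q_def field_simps abs_divide[symmetric])
qed

lemma has_word_frequencies_fixed_point: "has_word_frequencies x"
  unfolding has_word_frequencies_def
proof
  fix w
  obtain A where F: "(\<lambda>N. block_occ_freq w N False) \<longlonglongrightarrow> A"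
    and T: "(\<lambda>N. block_occ_freq w N True) \<longlonglongrightarrow> A"
    using block_occ_freq_converges by blast
  have "(\<lambda>N. real (length w) / real q ^ N) \<longlonglongrightarrow> 0"
    using q_ge_2 by (intro LIMSEQ_divide_realpow_zero) simp
  then have e: "(\<lambda>N. \<bar>block_occ_freq w N False - A\<bar> + \<bar>block_occ_freq w N True - A\<bar>
      + real (length w) / real q ^ N) \<longlonglongrightarrow> 0"
    using tendsto_rabs_zero[OF LIM_zero[OF F]] tendsto_rabs_zero[OF LIM_zero[OF T]]
    by (intro tendsto_add_zero)
  have "(\<lambda>n. real (occ_count x w n) / real n) \<longlonglongrightarrow> A"
    by (rule tendsto_if_uniform_approximations[OF occ_count_approx e])
  then show "convergent (\<lambda>n. real (occ_count x w n) / real n)"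
    by (rule convergentI)
qed

end

section \<open>Lines of the finite recurrence plot\<close>

lemma line_offset_le:
  assumes L: "is_line_fin x n i j l" and L': "is_line_fin x n i' j' l'"
    and k': "k' < l'" and e: "i + k = i' + k'" "j + k = j' + k'"
  shows "k' \<le> k"
proof (rule ccontr)
  assume "\<not> k' \<le> k"
  then obtain d where d: "k' = Suc (k + d)" using less_imp_Suc_add by (meson not_le)
  then have "i = i' + Suc d" "j = j' + Suc d" using e by simp_all
  moreover have "x (i' + d) = x (j' + d)"
    using L' k' d by (simp add: is_line_fin_def)
  ultimately show False
    using L by (simp add: is_line_fin_def)
qed

lemma line_length_le:
  assumes L: "is_line_fin x n i j l" and L': "is_line_fin x n i j l'"
  shows "l' \<le> l"
proof (rule ccontr)
  assume "\<not> l' \<le> l"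
  then show False
    using L L' by (auto simp: is_line_fin_def)
qed

lemma line_eq_if_common_point:
  assumes L: "is_line_fin x n i j l" and L': "is_line_fin x n i' j' l'"
    and k: "k < l" and k': "k' < l'" and e: "i + k = i' + k'" "j + k = j' + k'"
  shows "i = i' \<and> j = j' \<and> l = l' \<and> k = k'"
proof -
  have "k = k'"
    using line_offset_le[OF L L' k' e] line_offset_le[OF L' L k e[symmetric]] by simp
  with e have "i = i'" "j = j'" by simp_all
  with L L' show ?thesis
    using line_length_le \<open>k = k'\<close> by (metis le_antisym)
qed

lemma ex_first_failure:
  fixes m :: nat
  shows "\<exists>t\<le>m. (\<forall>s<t. P s) \<and> (t < m \<longrightarrow> \<not> P t)"
proof (cases "\<forall>s<m. P s")
  case False
  then obtain s where s: "s < m" "\<not> P s" by blast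
  define t where "t = (LEAST s. \<not> P s)"
  have "\<not> P t" "t \<le> s"
    unfolding t_def by (rule LeastI[of _ s], fact, rule Least_le, fact)
  moreover have "\<forall>s'<t. P s'"
    unfolding t_def using not_less_Least by blast
  ultimately show ?thesis
    using s(1) by (intro exI[of _ t]) auto
qed auto

text \<open>The line through a pair of agreeing windows is found by extending the agreement
  maximally to the left and then to the right.\<close>
lemma line_through_agreement:
  assumes ab: "a \<noteq> b" "a + ell \<le> n" "b + ell \<le> n" and agree: "\<forall>k<ell. x (a + k) = x (b + k)"
    and "ell \<ge> 1"
  shows "\<exists>i j l k. is_line_fin x n i j l \<and> k < l \<and> ell \<le> l \<and> a = i + k \<and> b = j + k"
proof -
  obtain t where t: "t \<le> min a b" "\<forall>s<t. x (a - s - 1) = x (b - s - 1)"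
    "t < min a b \<longrightarrow> x (a - t - 1) \<noteq> x (b - t - 1)"
    using ex_first_failure[of "min a b" "\<lambda>s. x (a - s - 1) = x (b - s - 1)"] by blast
  define i j where "i = a - t" and "j = b - t"
  have "x (i + k) = x (j + k)" if "k < t + ell" for k
  proof (cases "k < t")
    case True
    then show ?thesis
      using t(1) t(2)[rule_format, of "t - k - 1"] by (simp add: i_def j_def)
  next
    case False
    then show ?thesis
      using t(1) agree[rule_format, of "k - t"] that by (simp add: i_def j_def)
  qed
  moreover obtain l where l: "l \<le> n - max i j" "\<forall>r<l. x (i + r) = x (j + r)"
    "l < n - max i j \<longrightarrow> x (i + l) \<noteq> x (j + l)"
    using ex_first_failure[of "n - max i j" "\<lambda>r. x (i + r) = x (j + r)"] by blast
  moreover have "t + ell \<le> n - max i j"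
    using ab t(1) by (auto simp: i_def j_def max_def)
  ultimately have "t + ell \<le> l"
    using not_le order.strict_trans2 by blast
  moreover have "is_line_fin x n i j l"
    unfolding is_line_fin_def
  proof (intro conjI impI)
    show "i + l \<le> n" "j + l \<le> n" "\<forall>r<l. x (i + r) = x (j + r)"
      using l(1,2) \<open>t + ell \<le> n - max i j\<close> \<open>ell \<ge> 1\<close> by auto
    show "i \<noteq> j"
      using ab(1) t(1) by (auto simp: i_def j_def)
    show "x (i - 1) \<noteq> x (j - 1)" if "0 < min i j"
      using that t(1,3) by (simp add: i_def j_def)
    show "x (i + l) \<noteq> x (j + l)" if "max i j + l < n"
      using that l(3) by simp
  qed
  moreover have "a = i + t" "b = j + t"
    using t(1) by (simp_all add: i_def j_def)
  ultimately show ?thesis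
    using \<open>ell \<ge> 1\<close> by (intro exI[of _ i] exI[of _ j] exI[of _ l] exI[of _ t]) auto
qed

definition lines :: "(nat \<Rightarrow> bool) \<Rightarrow> nat \<Rightarrow> nat \<Rightarrow> (nat \<times> nat) set" where
  "lines x n l = {(i, j). i < n \<and> j < n \<and> is_line_fin x n i j l}"

text \<open>A triple \<open>(l, (i, j), k)\<close> stands for the \<open>k\<close>-th point \<open>(i + k, j + k)\<close> of the line
  \<open>(i, j, l)\<close>; \<open>RR\<^sub>\<ell>\<close> is the proportion of recurrence points lying on lines of length \<open>\<ge> \<ell>\<close>.\<close>
definition line_points :: "(nat \<Rightarrow> bool) \<Rightarrow> nat \<Rightarrow> nat set \<Rightarrow> (nat \<times> (nat \<times> nat) \<times> nat) set" where
  "line_points x n A = Sigma A (\<lambda>l. lines x n l \<times> {..<l})"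

definition line_point :: "nat \<times> (nat \<times> nat) \<times> nat \<Rightarrow> nat \<times> nat" where
  "line_point = (\<lambda>(l, (i, j), k). (i + k, j + k))"

lemma finite_lines: "finite (lines x n l)"
  by (rule finite_subset[of _ "{..<n} \<times> {..<n}"]) (auto simp: lines_def)

lemma N_lines_eq_card: "N_lines x n l = card (lines x n l)"
  by (simp add: N_lines_def lines_def)

lemma line_points_restrict: "line_points x n A = line_points x n (A \<inter> {..n})"
  unfolding line_points_def lines_def is_line_fin_def by auto

lemma finite_line_points: "finite (line_points x n A)"
  by (subst line_points_restrict) (auto simp: line_points_def finite_lines)

lemma card_line_points: "finite A \<Longrightarrow> card (line_points x n A) = (\<Sum>l\<in>A. l * N_lines x n l)"
  unfolding line_points_def
  by (subst card_SigmaI) (auto simp: finite_lines card_cartesian_product N_lines_eq_card mult.commute)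

lemma inj_on_line_point: "inj_on line_point (line_points x n A)"
proof (rule inj_onI)
  fix u v assume "u \<in> line_points x n A" "v \<in> line_points x n A" "line_point u = line_point v"
  moreover obtain l i j k l' i' j' k' where "u = (l, (i, j), k)" "v = (l', (i', j'), k')"
    by (metis prod.collapse)
  ultimately show "u = v"
    using line_eq_if_common_point[of x n i j l i' j' l' k k']
    by (auto simp: line_points_def lines_def line_point_def)
qed

lemma line_point_image: "line_point ` line_points x n A \<subseteq> {(a, b). a < n \<and> b < n \<and> a \<noteq> b}"
proof
  fix p assume "p \<in> line_point ` line_points x n A"
  then obtain l i j k where "is_line_fin x n i j l" "k < l" "p = (i + k, j + k)"
    by (auto simp: line_points_def lines_def line_point_def)
  then show "p \<in> {(a, b). a < n \<and> b < n \<and> a \<noteq> b}"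
    unfolding is_line_fin_def by auto
qed

lemma card_line_points_le: "card (line_points x n A) \<le> n * n"
proof -
  have "card (line_points x n A) = card (line_point ` line_points x n A)"
    using inj_on_line_point by (simp add: card_image)
  also have "\<dots> \<le> card ({..<n} \<times> {..<n})"
    using line_point_image[of x n A] by (intro card_mono) auto
  finally show ?thesis by simp
qed

lemma RR_fin_eq_card: "RR_fin x ell n = real (card (line_points x n {ell..n})) / (real n ^ 2 - real n)"
  unfolding RR_fin_def lambda_l_def
  by (simp add: card_line_points sum_divide_distrib)

lemma agreeing_windows_subset_line_points:
  assumes "ell \<ge> 1"
  shows "{(a, b). a \<noteq> b \<and> a + ell \<le> n \<and> b + ell \<le> n \<and> (\<forall>k<ell. x (a + k) = x (b + k))}
    \<subseteq> line_point ` line_points x n {ell..n}"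
proof safe
  fix a b assume ab: "a \<noteq> b" "a + ell \<le> n" "b + ell \<le> n" "\<forall>k<ell. x (a + k) = x (b + k)"
  then obtain i j l k where L: "is_line_fin x n i j l" "k < l" "ell \<le> l" "a = i + k" "b = j + k"
    using line_through_agreement[OF ab assms] by blast
  then have "(l, (i, j), k) \<in> line_points x n {ell..n}"
    by (auto simp: line_points_def lines_def is_line_fin_def)
  moreover have "line_point (l, (i, j), k) = (a, b)"
    using L by (simp add: line_point_def)
  ultimately show "(a, b) \<in> line_point ` line_points x n {ell..n}"
    by force
qed

lemma card_separated_le:
  fixes g n :: nat
  assumes "g > 0" and "F \<subseteq> {..<n}" and sep: "\<And>b b'. b \<in> F \<Longrightarrow> b' \<in> F \<Longrightarrow> b < b' \<Longrightarrow> b + g \<le> b'"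
  shows "card F \<le> (n - 1) div g + 1"
proof -
  have lt: "b div g < b' div g" if "b \<in> F" "b' \<in> F" "b < b'" for b b'
    using div_le_mono[OF sep[OF that], of g] \<open>g > 0\<close> by simp
  have "inj_on (\<lambda>b. b div g) F"
  proof (rule inj_onI)
    fix b b' assume "b \<in> F" "b' \<in> F" "b div g = b' div g"
    then show "b = b'"
      using lt[of b b'] lt[of b' b] by (cases b b' rule: linorder_cases) auto
  qed
  moreover have "b div g \<le> (n - 1) div g" if "b \<in> F" for b
    using that assms(2) by (intro div_le_mono) auto
  then have "(\<lambda>b. b div g) ` F \<subseteq> {..(n - 1) div g}"
    by auto
  ultimately have "card F \<le> card {..(n - 1) div g}"
    by (metis card_image card_mono finite_atMost)
  then show ?thesis by simp
qed

definition agreeing_pairs :: "(nat \<Rightarrow> bool) \<Rightarrow> nat \<Rightarrow> nat \<Rightarrow> (nat \<times> nat) set" where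
  "agreeing_pairs x n h = Sigma {..<n} (\<lambda>a. {b. b < n \<and> b \<noteq> a \<and> (\<forall>k<h. x (a + k) = x (b + k))})"

lemma finite_agreeing_pairs: "finite (agreeing_pairs x n h)"
  unfolding agreeing_pairs_def by auto

text \<open>Two windows agreeing with the same window at distance less than \<open>g\<close> would form a
  periodic run; hence each row of \<open>agreeing_pairs\<close> is \<open>g\<close>-separated.\<close>
lemma card_agreeing_pairs_le:
  assumes "g > 0" and runs: "\<forall>a p. 0 < p \<longrightarrow> p < g \<longrightarrow> \<not> (\<forall>k<h. x (a + k) = x (a + k + p))"
  shows "card (agreeing_pairs x n h) \<le> n * ((n - 1) div g + 1)"
proof -
  have "card {b. b < n \<and> b \<noteq> a \<and> (\<forall>k<h. x (a + k) = x (b + k))} \<le> (n - 1) div g + 1" for a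
  proof (rule card_separated_le[OF \<open>g > 0\<close>])
    fix b b' assume b: "b \<in> {b. b < n \<and> b \<noteq> a \<and> (\<forall>k<h. x (a + k) = x (b + k))}"
      and b': "b' \<in> {b. b < n \<and> b \<noteq> a \<and> (\<forall>k<h. x (a + k) = x (b + k))}" and "b < b'"
    then have per: "\<forall>k<h. x (b + k) = x (b + k + (b' - b))"
      by (simp add: add.commute add.left_commute)
    show "b + g \<le> b'"
    proof (rule ccontr)
      assume "\<not> b + g \<le> b'"
      then have "0 < b' - b" "b' - b < g"
        using \<open>b < b'\<close> by auto
      with runs per show False by blast
    qed
  qed auto
  then have "(\<Sum>a<n. card {b. b < n \<and> b \<noteq> a \<and> (\<forall>k<h. x (a + k) = x (b + k))})
      \<le> (\<Sum>a<n. (n - 1) div g + 1)"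
    by (intro sum_mono)
  then show ?thesis
    unfolding agreeing_pairs_def by (subst card_SigmaI) auto
qed

lemma long_line_points_subset:
  assumes "h \<ge> 1" and long: "\<forall>l\<in>A. 2 * h \<le> l"
  shows "line_point ` line_points x n A
    \<subseteq> agreeing_pairs x n h \<union> (\<lambda>(a, b). (a + (h - 1), b + (h - 1))) ` agreeing_pairs x n h"
proof
  fix p assume "p \<in> line_point ` line_points x n A"
  then obtain l i j k where "l \<in> A" and L: "is_line_fin x n i j l" and "k < l" and p: "p = (i + k, j + k)"
    by (auto simp: line_points_def lines_def line_point_def)
  then have lh: "2 * h \<le> l" using long by blast
  have agree: "\<forall>k<l. x (i + k) = x (j + k)" "i + l \<le> n" "j + l \<le> n" "i \<noteq> j"
    using L by (auto simp: is_line_fin_def)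
  show "p \<in> agreeing_pairs x n h \<union> (\<lambda>(a, b). (a + (h - 1), b + (h - 1))) ` agreeing_pairs x n h"
  proof (cases "k + h \<le> l")
    case True
    then have "(i + k, j + k) \<in> agreeing_pairs x n h"
      using agree \<open>k < l\<close> by (auto simp: agreeing_pairs_def add.assoc)
    then show ?thesis using p by simp
  next
    case False
    define k0 where "k0 = k - (h - 1)"
    have k0: "k = k0 + (h - 1)" "k0 + h \<le> l"
      using False lh \<open>h \<ge> 1\<close> \<open>k < l\<close> by (simp_all add: k0_def)
    then have "(i + k0, j + k0) \<in> agreeing_pairs x n h"
      using agree \<open>k < l\<close> by (auto simp: agreeing_pairs_def add.assoc)
    then show ?thesis
      using p k0(1) by (auto simp: image_iff add.assoc intro!: bexI[of _ "(i + k0, j + k0)"])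
  qed
qed

lemma card_long_line_points_le:
  assumes "h \<ge> 1" and "\<forall>l\<in>A. 2 * h \<le> l"
  shows "card (line_points x n A) \<le> 2 * card (agreeing_pairs x n h)"
proof -
  let ?D = "agreeing_pairs x n h" and ?shift = "\<lambda>(a, b). (a + (h - 1), b + (h - 1))"
  have "card (line_points x n A) = card (line_point ` line_points x n A)"
    using inj_on_line_point by (simp add: card_image)
  also have "\<dots> \<le> card (?D \<union> ?shift ` ?D)"
    using long_line_points_subset[OF assms] finite_agreeing_pairs by (intro card_mono) auto
  also have "\<dots> \<le> card ?D + card (?shift ` ?D)" by (rule card_Un_le)
  also have "card (?shift ` ?D) \<le> card ?D" by (rule card_image_le[OF finite_agreeing_pairs])
  finally show ?thesis by simp
qed

section \<open>Inner lines of the infinite recurrence plot\<close>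

definition flip_ends :: "nat \<Rightarrow> bool list \<Rightarrow> bool list" where
  "flip_ends l u = u[0 := \<not> u ! 0, Suc l := \<not> u ! Suc l]"

lemma length_flip_ends [simp]: "length (flip_ends l u) = length u"
  by (simp add: flip_ends_def)

lemma nth_flip_ends:
  assumes "length u = Suc (Suc l)" and "k < Suc (Suc l)"
  shows "flip_ends l u ! k = (if k = 0 \<or> k = Suc l then \<not> u ! k else u ! k)"
  using assms by (auto simp: flip_ends_def nth_list_update)

lemma occurs_at_unique: "occurs_at x u i \<Longrightarrow> occurs_at x u' i \<Longrightarrow> length u = length u' \<Longrightarrow> u = u'"
  by (auto simp: occurs_at_def intro: nth_equalityI)

lemma inner_line_iff_flipped_occurrence:
  assumes "0 < i" "0 < j"
  shows "is_inner_line_inf x i j l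
    \<longleftrightarrow> occurs_at x (flip_ends l (map (\<lambda>k. x (i - 1 + k)) [0..<Suc (Suc l)])) (j - 1)"
proof -
  let ?w = "map (\<lambda>k. x (i - 1 + k)) [0..<Suc (Suc l)]"
  have "occurs_at x (flip_ends l ?w) (j - 1) \<longleftrightarrow>
      (\<forall>k<Suc (Suc l). x (j - 1 + k) = (if k = 0 \<or> k = Suc l then \<not> x (i - 1 + k) else x (i - 1 + k)))"
    unfolding occurs_at_def by (simp add: nth_flip_ends del: upt_Suc)
  also have "\<dots> \<longleftrightarrow> x (j - 1) \<noteq> x (i - 1) \<and> (\<forall>k<l. x (j + k) = x (i + k)) \<and> x (j + l) \<noteq> x (i + l)"
  proof
    assume all: "\<forall>k<Suc (Suc l). x (j - 1 + k) = (if k = 0 \<or> k = Suc l then \<not> x (i - 1 + k) else x (i - 1 + k))"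
    have "x (j + k) = x (i + k)" if "k < l" for k
      using all[rule_format, of "Suc k"] that assms by simp
    then show "x (j - 1) \<noteq> x (i - 1) \<and> (\<forall>k<l. x (j + k) = x (i + k)) \<and> x (j + l) \<noteq> x (i + l)"
      using all[rule_format, of 0] all[rule_format, of "Suc l"] assms by auto
  next
    assume line: "x (j - 1) \<noteq> x (i - 1) \<and> (\<forall>k<l. x (j + k) = x (i + k)) \<and> x (j + l) \<noteq> x (i + l)"
    show "\<forall>k<Suc (Suc l). x (j - 1 + k) = (if k = 0 \<or> k = Suc l then \<not> x (i - 1 + k) else x (i - 1 + k))"
    proof (intro allI impI)
      fix k assume "k < Suc (Suc l)"
      then consider "k = 0" | "k = Suc l" | k' where "k = Suc k'" "k' < l"
        by (cases k) (auto simp: less_Suc_eq)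
      then show "x (j - 1 + k) = (if k = 0 \<or> k = Suc l then \<not> x (i - 1 + k) else x (i - 1 + k))"
        by cases (use line assms in auto)
    qed
  qed
  finally show ?thesis
    using assms by (auto simp: is_inner_line_inf_def)
qed

definition shifted_occurrences :: "(nat \<Rightarrow> 'a) \<Rightarrow> 'a list \<Rightarrow> nat \<Rightarrow> nat set" where
  "shifted_occurrences x u n = Suc ` {r. r < n - 1 \<and> occurs_at x u r}"

lemma mem_shifted_occurrences:
  "i \<in> shifted_occurrences x u n \<longleftrightarrow> 0 < i \<and> i < n \<and> occurs_at x u (i - 1)"
  by (cases i) (auto simp: shifted_occurrences_def)

lemma card_shifted_occurrences: "card (shifted_occurrences x u n) = occ_count x u (n - 1)"
  by (simp add: shifted_occurrences_def card_image occ_count_def hits_eq_card)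

lemma finite_shifted_occurrences: "finite (shifted_occurrences x u n)"
  by (simp add: shifted_occurrences_def)

lemma finite_bool_words: "finite {u :: bool list. length u = m}"
  using finite_lists_length_eq[of "UNIV :: bool set" m] by simp

lemma K_set_box_eq:
  "K_set x l \<inter> ({..<n} \<times> {..<n})
    = (\<Union>u\<in>{u. length u = Suc (Suc l)}. shifted_occurrences x u n \<times> shifted_occurrences x (flip_ends l u) n)"
proof safe
  fix i j assume "(i, j) \<in> K_set x l" "i < n" "j < n"
  then have "0 < i" "0 < j" and line: "is_inner_line_inf x i j l"
    by (auto simp: K_set_def is_inner_line_inf_def)
  let ?w = "map (\<lambda>k. x (i - 1 + k)) [0..<Suc (Suc l)]"
  have "i \<in> shifted_occurrences x ?w n"
    using \<open>0 < i\<close> \<open>i < n\<close> by (simp add: mem_shifted_occurrences occurs_at_def del: upt_Suc)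
  moreover have "j \<in> shifted_occurrences x (flip_ends l ?w) n"
    using line \<open>0 < i\<close> \<open>0 < j\<close> \<open>j < n\<close>
    by (simp add: mem_shifted_occurrences inner_line_iff_flipped_occurrence del: upt_Suc)
  ultimately show "(i, j) \<in> (\<Union>u\<in>{u. length u = Suc (Suc l)}.
      shifted_occurrences x u n \<times> shifted_occurrences x (flip_ends l u) n)"
    by (intro UN_I[of ?w]) auto
next
  fix u i j assume u: "length u = Suc (Suc l)" and i: "i \<in> shifted_occurrences x u n"
    and j: "j \<in> shifted_occurrences x (flip_ends l u) n"
  let ?w = "map (\<lambda>k. x (i - 1 + k)) [0..<Suc (Suc l)]"
  have "occurs_at x ?w (i - 1)"
    by (simp add: occurs_at_def del: upt_Suc)
  then have "u = ?w"
    using i u by (intro occurs_at_unique[of x u "i - 1"]) (auto simp: mem_shifted_occurrences)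
  then show "(i, j) \<in> K_set x l"
    using i j by (simp add: K_set_def mem_shifted_occurrences inner_line_iff_flipped_occurrence)
  show "i < n" "j < n"
    using i j by (simp_all add: mem_shifted_occurrences)
qed

lemma card_K_set_box:
  "card (K_set x l \<inter> ({..<n} \<times> {..<n}))
    = (\<Sum>u | length u = Suc (Suc l). occ_count x u (n - 1) * occ_count x (flip_ends l u) (n - 1))"
proof -
  have "(shifted_occurrences x u n \<times> shifted_occurrences x (flip_ends l u) n)
      \<inter> (shifted_occurrences x v n \<times> shifted_occurrences x (flip_ends l v) n) = {}"
    if "length u = length v" "u \<noteq> v" for u v
    using that by (auto simp: mem_shifted_occurrences dest: occurs_at_unique)
  then show ?thesis
    unfolding K_set_box_eq
    by (subst card_UN_disjoint)
      (auto simp: finite_bool_words finite_shifted_occurrences card_cartesian_product card_shifted_occurrences)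
qed

lemma tendsto_div_n_if_bounded_diff:
  fixes a b :: "nat \<Rightarrow> real"
  assumes a: "(\<lambda>n. a n / real n) \<longlonglongrightarrow> f" and diff: "\<And>n. \<bar>b n - a n\<bar> \<le> C"
  shows "(\<lambda>n. b n / real n) \<longlonglongrightarrow> f"
proof -
  have "- C \<le> b n - a n" "b n - a n \<le> C" for n
    using diff[of n] by (simp_all add: abs_le_iff)
  then have lower: "- C / real n \<le> (b n - a n) / real n" and upper: "(b n - a n) / real n \<le> C / real n" for n
    by (simp_all only: divide_right_mono of_nat_0_le_iff)
  have "(\<lambda>n. (b n - a n) / real n) \<longlonglongrightarrow> 0"
  proof (rule tendsto_sandwich[of "\<lambda>n. - C / real n" _ _ "\<lambda>n. C / real n"])
    show "\<forall>\<^sub>F n in sequentially. - C / real n \<le> (b n - a n) / real n"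
      using lower by simp
    show "\<forall>\<^sub>F n in sequentially. (b n - a n) / real n \<le> C / real n"
      using upper by simp
    show "(\<lambda>n. - C / real n) \<longlonglongrightarrow> 0" "(\<lambda>n. C / real n) \<longlonglongrightarrow> 0"
      using lim_const_over_n[of "- C"] lim_const_over_n[of C] by simp_all
  qed
  from tendsto_add[OF a this] show ?thesis
    by (simp add: diff_divide_distrib)
qed

lemma occ_count_shift_tendsto:
  assumes "(\<lambda>n. real (occ_count x w n) / real n) \<longlonglongrightarrow> f"
  shows "(\<lambda>n. real (occ_count x w (n - c)) / real n) \<longlonglongrightarrow> f"
proof (rule tendsto_div_n_if_bounded_diff[OF assms])
  show "\<bar>real (occ_count x w (n - c)) - real (occ_count x w n)\<bar> \<le> real c" for n
    using hits_diff_le[of "occurs_at x w" n c] unfolding occ_count_def by linarith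
qed

lemma word_freq_tendsto:
  "has_word_frequencies x \<Longrightarrow> (\<lambda>n. real (occ_count x w n) / real n) \<longlonglongrightarrow> word_freq x w"
  by (simp add: has_word_frequencies_def word_freq_def convergent_LIMSEQ_iff)

definition inner_line_density :: "(nat \<Rightarrow> bool) \<Rightarrow> nat \<Rightarrow> real" where
  "inner_line_density x l
     = (\<Sum>u | length u = Suc (Suc l). word_freq x u * word_freq x (flip_ends l u))"

lemma K_set_density_tendsto:
  assumes "has_word_frequencies x"
  shows "(\<lambda>n. real (card (K_set x l \<inter> ({..<n} \<times> {..<n}))) / real n ^ 2) \<longlonglongrightarrow> inner_line_density x l"
proof -
  have "(\<lambda>n. \<Sum>u | length u = Suc (Suc l).
      (real (occ_count x u (n - 1)) / real n) * (real (occ_count x (flip_ends l u) (n - 1)) / real n))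
    \<longlonglongrightarrow> inner_line_density x l"
    unfolding inner_line_density_def
    by (intro tendsto_sum tendsto_mult occ_count_shift_tendsto word_freq_tendsto[OF assms])
  then show ?thesis
    by (simp add: card_K_set_box sum_divide_distrib power2_eq_square)
qed

lemma asymp_density_K_set:
  "has_word_frequencies x \<Longrightarrow> asymp_density (K_set x l) = inner_line_density x l"
  unfolding asymp_density_def by (rule limI[OF K_set_density_tendsto])

lemma inner_line_density_nonneg: "has_word_frequencies x \<Longrightarrow> inner_line_density x l \<ge> 0"
  by (rule LIMSEQ_le_const[OF K_set_density_tendsto]) auto

lemma card_diff_le_if_common_core:
  assumes "finite L" "finite K" "finite B"
    and "C \<subseteq> L" "C \<subseteq> K" "L \<subseteq> C \<union> B" "K \<subseteq> C \<union> B"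
  shows "\<bar>real (card L) - real (card K)\<bar> \<le> real (card B)"
proof -
  have "finite C" using assms(1,4) by (rule finite_subset[rotated])
  have "card L \<le> card C + card B" "card K \<le> card C + card B"
    using assms \<open>finite C\<close> card_Un_le[of C B] card_mono[of "C \<union> B"] by (meson finite_UnI le_trans)+
  moreover have "card C \<le> card L" "card C \<le> card K"
    using assms by (simp_all add: card_mono)
  ultimately show ?thesis by linarith
qed

lemma card_border_le:
  "card {(i, j). i < n \<and> j < n \<and> (i = 0 \<or> j = 0 \<or> n \<le> i + l \<or> n \<le> j + l)} \<le> (2 * l + 2) * n"
proof -
  let ?B = "({0} \<times> {..<n} \<union> {..<n} \<times> {0}) \<union> ({n - l..<n} \<times> {..<n} \<union> {..<n} \<times> {n - l..<n})"
  have "card ?B \<le> (card ({0::nat} \<times> {..<n}) + card ({..<n} \<times> {0::nat}))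
      + (card ({n - l..<n} \<times> {..<n}) + card ({..<n} \<times> {n - l..<n}))"
    by (meson add_mono card_Un_le le_trans)
  also have "\<dots> \<le> (n + n) + (l * n + n * l)"
  proof -
    have "n - (n - l) \<le> l" by simp
    then have "(n - (n - l)) * n + n * (n - (n - l)) \<le> l * n + n * l"
      by (intro add_mono mult_le_mono) auto
    then show ?thesis by (simp add: card_cartesian_product)
  qed
  finally have "card ?B \<le> (2 * l + 2) * n" by (simp add: algebra_simps)
  moreover have "card {(i, j). i < n \<and> j < n \<and> (i = 0 \<or> j = 0 \<or> n \<le> i + l \<or> n \<le> j + l)} \<le> card ?B"
    by (rule card_mono) auto
  ultimately show ?thesis
    by linarith
qed

text \<open>Finite-plot lines and inner lines of the infinite plot coincide away from the border
  strips of width \<open>l\<close> and the first row and column.\<close>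
lemma N_lines_K_set_diff:
  "\<bar>real (N_lines x n l) - real (card (K_set x l \<inter> ({..<n} \<times> {..<n})))\<bar> \<le> real ((2 * l + 2) * n)"
proof -
  let ?K = "K_set x l \<inter> ({..<n} \<times> {..<n})"
  let ?B = "{(i, j). i < n \<and> j < n \<and> (i = 0 \<or> j = 0 \<or> n \<le> i + l \<or> n \<le> j + l)}"
  let ?C = "{(i, j). (i, j) \<in> ?K \<and> i + l < n \<and> j + l < n}"
  have "?C \<subseteq> lines x n l"
    by (auto simp: K_set_def lines_def is_line_fin_def is_inner_line_inf_def)
  moreover have "lines x n l \<subseteq> ?C \<union> ?B"
    by (auto simp: K_set_def lines_def is_line_fin_def is_inner_line_inf_def)
  moreover have "?K \<subseteq> ?C \<union> ?B"
    by auto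
  moreover have "finite ?B"
    by (rule finite_subset[of _ "{..<n} \<times> {..<n}"]) auto
  ultimately have "\<bar>real (card (lines x n l)) - real (card ?K)\<bar> \<le> real (card ?B)"
    by (intro card_diff_le_if_common_core) (auto simp: finite_lines)
  then show ?thesis
    using card_border_le[of n l] unfolding N_lines_eq_card by linarith
qed

lemma square_div_square_minus_self_tendsto: "(\<lambda>n. real n ^ 2 / (real n ^ 2 - real n)) \<longlonglongrightarrow> 1"
proof -
  have "(\<lambda>n. inverse (1 - 1 / real n)) \<longlonglongrightarrow> inverse (1 - 0)"
    by (intro tendsto_intros lim_const_over_n) simp
  moreover have "\<forall>\<^sub>F n in sequentially. inverse (1 - 1 / real n) = real n ^ 2 / (real n ^ 2 - real n)"
    using eventually_gt_at_top[of 1] by eventually_elim (simp add: field_simps power2_eq_square)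
  ultimately show ?thesis
    using Lim_transform_eventually by fastforce
qed

lemma N_lines_density_tendsto:
  assumes "has_word_frequencies x"
  shows "(\<lambda>n. real (N_lines x n l) / (real n ^ 2 - real n)) \<longlonglongrightarrow> inner_line_density x l"
proof -
  define Kc where "Kc n = real (card (K_set x l \<inter> ({..<n} \<times> {..<n})))" for n
  have "(\<lambda>n. (Kc n / real n) / real n) \<longlonglongrightarrow> inner_line_density x l"
    using K_set_density_tendsto[OF assms, of l] by (simp add: Kc_def power2_eq_square)
  then have "(\<lambda>n. (real (N_lines x n l) / real n) / real n) \<longlonglongrightarrow> inner_line_density x l"
  proof (rule tendsto_div_n_if_bounded_diff)
    fix n
    have "\<bar>real (N_lines x n l) - Kc n\<bar> \<le> real (2 * l + 2) * real n"
      using N_lines_K_set_diff[of x n l] by (simp add: Kc_def algebra_simps)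
    then show "\<bar>real (N_lines x n l) / real n - Kc n / real n\<bar> \<le> real (2 * l + 2)"
      by (cases "n = 0") (auto simp: diff_divide_distrib[symmetric] abs_divide field_simps)
  qed
  then have "(\<lambda>n. real (N_lines x n l) / real n ^ 2 * (real n ^ 2 / (real n ^ 2 - real n)))
      \<longlonglongrightarrow> inner_line_density x l * 1"
    using square_div_square_minus_self_tendsto by (intro tendsto_mult) (simp_all add: power2_eq_square)
  moreover have "\<forall>\<^sub>F n in sequentially. real (N_lines x n l) / real n ^ 2 * (real n ^ 2 / (real n ^ 2 - real n))
      = real (N_lines x n l) / (real n ^ 2 - real n)"
    using eventually_gt_at_top[of 0] by eventually_elim (simp add: field_simps)
  ultimately show ?thesis
    using Lim_transform_eventually by fastforce
qed

section \<open>The recurrence rate\<close>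

definition RR_partial :: "(nat \<Rightarrow> bool) \<Rightarrow> nat \<Rightarrow> nat \<Rightarrow> nat \<Rightarrow> real" where
  "RR_partial x ell K n = real (card (line_points x n {ell..<ell + K})) / (real n ^ 2 - real n)"

lemma square_minus_self_nonneg: "real n ^ 2 - real n \<ge> 0"
  by (cases n) (simp_all add: power2_eq_square)

lemma RR_partial_tendsto:
  assumes "has_word_frequencies x"
  shows "(\<lambda>n. RR_partial x ell K n) \<longlonglongrightarrow> (\<Sum>m<K. real (m + ell) * inner_line_density x (m + ell))"
proof -
  have "(\<lambda>n. \<Sum>l\<in>{ell..<ell + K}. real l * (real (N_lines x n l) / (real n ^ 2 - real n)))
      \<longlonglongrightarrow> (\<Sum>l\<in>{ell..<ell + K}. real l * inner_line_density x l)"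
    by (intro tendsto_sum tendsto_mult tendsto_const N_lines_density_tendsto[OF assms])
  moreover have "(\<Sum>l\<in>{ell..<ell + K}. real l * (real (N_lines x n l) / (real n ^ 2 - real n)))
      = RR_partial x ell K n" for n
    by (simp add: RR_partial_def card_line_points sum_divide_distrib)
  moreover have "(\<Sum>l\<in>{ell..<ell + K}. real l * inner_line_density x l)
      = (\<Sum>m<K. real (m + ell) * inner_line_density x (m + ell))"
    using sum.shift_bounds_nat_ivl[of "\<lambda>l. real l * inner_line_density x l" 0 ell K]
    by (simp add: atLeast0LessThan add.commute)
  ultimately show ?thesis by simp
qed

lemma RR_partial_le: "RR_partial x ell K n \<le> RR_fin x ell n"
proof -
  have "line_points x n {ell..<ell + K} \<subseteq> line_points x n {ell..n}"
    by (subst line_points_restrict) (auto simp: line_points_def)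
  then have "card (line_points x n {ell..<ell + K}) \<le> card (line_points x n {ell..n})"
    by (rule card_mono[OF finite_line_points])
  then show ?thesis
    unfolding RR_partial_def RR_fin_eq_card using square_minus_self_nonneg[of n]
    by (intro divide_right_mono) auto
qed

lemma partial_density_sum_le_1:
  assumes "has_word_frequencies x"
  shows "(\<Sum>m<K. real (m + ell) * inner_line_density x (m + ell)) \<le> 1"
proof (rule LIMSEQ_le[OF RR_partial_tendsto[OF assms] square_div_square_minus_self_tendsto])
  have "RR_partial x ell K n \<le> real n ^ 2 / (real n ^ 2 - real n)" for n
    using card_line_points_le[of x n "{ell..<ell + K}"] square_minus_self_nonneg[of n]
    unfolding RR_partial_def power2_eq_square
    by (intro divide_right_mono) (simp_all flip: of_nat_mult)
  then show "\<exists>N. \<forall>n\<ge>N. RR_partial x ell K n \<le> real n ^ 2 / (real n ^ 2 - real n)"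
    by blast
qed

lemma card_line_points_le_partial:
  assumes "g > 0" "h \<ge> 1" and runs: "\<forall>a p. 0 < p \<longrightarrow> p < g \<longrightarrow> \<not> (\<forall>k<h. x (a + k) = x (a + k + p))"
    and "2 * h \<le> ell + K"
  shows "real (card (line_points x n {ell..n}))
    \<le> real (card (line_points x n {ell..<ell + K})) + 2 * real n * (real n / real g + 1)"
proof -
  have "line_points x n {ell..n} \<subseteq> line_points x n {ell..<ell + K} \<union> line_points x n {ell + K..n}"
    unfolding line_points_def by auto
  then have "card (line_points x n {ell..n})
      \<le> card (line_points x n {ell..<ell + K}) + card (line_points x n {ell + K..n})"
    by (meson card_Un_le card_mono finite_UnI finite_line_points le_trans)
  moreover have "card (line_points x n {ell + K..n}) \<le> 2 * card (agreeing_pairs x n h)"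
    using assms by (intro card_long_line_points_le) auto
  moreover have "card (agreeing_pairs x n h) \<le> n * ((n - 1) div g + 1)"
    using card_agreeing_pairs_le[OF \<open>g > 0\<close> runs] .
  ultimately have "card (line_points x n {ell..n})
      \<le> card (line_points x n {ell..<ell + K}) + 2 * (n * ((n - 1) div g + 1))"
    by linarith
  then have "real (card (line_points x n {ell..n}))
      \<le> real (card (line_points x n {ell..<ell + K}) + 2 * (n * ((n - 1) div g + 1)))"
    by (simp only: of_nat_le_iff)
  then have "real (card (line_points x n {ell..n}))
      \<le> real (card (line_points x n {ell..<ell + K})) + 2 * (real n * (real ((n - 1) div g) + 1))"
    by (simp add: algebra_simps)
  moreover have "real ((n - 1) div g) \<le> real (n - 1) / real g"
    by (rule of_nat_div_le_of_nat)
  moreover have "real (n - 1) / real g \<le> real n / real g"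
    by (intro divide_right_mono) auto
  ultimately have "real (card (line_points x n {ell..n}))
      \<le> real (card (line_points x n {ell..<ell + K})) + 2 * (real n * (real n / real g + 1))"
    by (smt (verit) mult_left_mono of_nat_0_le_iff)
  then show ?thesis by simp
qed

lemma RR_fin_le_partial:
  assumes "g > 0" "h \<ge> 1" "\<forall>a p. 0 < p \<longrightarrow> p < g \<longrightarrow> \<not> (\<forall>k<h. x (a + k) = x (a + k + p))"
    and "2 * h \<le> ell + K" and n: "real n \<ge> real g + 2"
  shows "RR_fin x ell n \<le> RR_partial x ell K n + 4 / real g"
proof -
  have g: "real g > 0" using \<open>g > 0\<close> by simp
  have pairs: "real n ^ 2 - real n = real n * (real n - 1)" "real n * (real n - 1) > 0"
    using n g by (simp_all add: power2_eq_square algebra_simps)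
  have "2 * real n * (real n / real g + 1) = 2 * real n * (real n + real g) / real g"
    using g by (simp add: field_simps)
  also have "\<dots> \<le> 2 * real n * (2 * (real n - 1)) / real g"
    using n g by (intro divide_right_mono mult_left_mono) auto
  also have "\<dots> = 4 * (real n * (real n - 1)) / real g"
    by simp
  finally have "2 * real n * (real n / real g + 1) / (real n ^ 2 - real n) \<le> 4 / real g"
    using pairs by (simp add: divide_le_eq field_simps)
  moreover have "RR_fin x ell n \<le> RR_partial x ell K n + 2 * real n * (real n / real g + 1) / (real n ^ 2 - real n)"
    using card_line_points_le_partial[OF assms(1-4), of n] square_minus_self_nonneg[of n]
    unfolding RR_fin_eq_card RR_partial_def add_divide_distrib[symmetric]
    by (intro divide_right_mono) auto
  ultimately show ?thesis by linarith
qed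

lemma periodic_runs_boundedE:
  assumes "periodic_runs_bounded x"
  obtains h where "h \<ge> 1" and "\<forall>a p. 0 < p \<longrightarrow> p < g \<longrightarrow> \<not> (\<forall>k<h. x (a + k) = x (a + k + p))"
proof -
  obtain h where h: "\<forall>a p. 0 < p \<longrightarrow> p < g \<longrightarrow> \<not> (\<forall>k<h. x (a + k) = x (a + k + p))"
    using assms unfolding periodic_runs_bounded_def by blast
  have "\<forall>a p. 0 < p \<longrightarrow> p < g \<longrightarrow> \<not> (\<forall>k<max h 1. x (a + k) = x (a + k + p))"
    using h by (meson less_max_iff_disj)
  then show ?thesis using that[of "max h 1"] by simp
qed

lemma RR_fin_tendsto:
  fixes ell :: nat
  assumes freq: "has_word_frequencies x" and runs: "periodic_runs_bounded x"
  defines "f \<equiv> \<lambda>m. real (m + ell) * inner_line_density x (m + ell)"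
  shows "summable f" and "(\<lambda>n. RR_fin x ell n) \<longlonglongrightarrow> suminf f"
proof -
  have "0 \<le> f m" for m
    using inner_line_density_nonneg[OF freq] by (simp add: f_def)
  then show "summable f"
    using partial_density_sum_le_1[OF freq] by (intro summableI_nonneg_bounded) (auto simp: f_def)
  then have partial_sums: "(\<lambda>K. \<Sum>m<K. f m) \<longlonglongrightarrow> suminf f"
    by (rule summable_LIMSEQ)
  show "(\<lambda>n. RR_fin x ell n) \<longlonglongrightarrow> suminf f"
  proof (rule tendsto_if_squeezed_by_approximants[where a = "\<lambda>K n. RR_partial x ell K n", OF _ partial_sums])
    show "(\<lambda>n. RR_partial x ell K n) \<longlonglongrightarrow> (\<Sum>m<K. f m)" for K
      using RR_partial_tendsto[OF freq] by (simp add: f_def)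
    show "RR_partial x ell K n \<le> RR_fin x ell n" for K n
      by (rule RR_partial_le)
    fix \<epsilon> :: real assume "\<epsilon> > 0"
    obtain g :: nat where g: "4 / \<epsilon> < real g"
      using reals_Archimedean2 by blast
    moreover have "0 < 4 / \<epsilon>"
      using \<open>\<epsilon> > 0\<close> by simp
    ultimately have "g > 0" by linarith
    have "4 < \<epsilon> * real g"
      using g \<open>\<epsilon> > 0\<close> by (simp add: divide_less_eq mult.commute)
    then have "4 / real g < \<epsilon>"
      using \<open>g > 0\<close> by (simp add: field_simps)
    obtain h where "h \<ge> 1" and h: "\<forall>a p. 0 < p \<longrightarrow> p < g \<longrightarrow> \<not> (\<forall>k<h. x (a + k) = x (a + k + p))"
      using periodic_runs_boundedE[OF runs] by blast
    have "\<forall>\<^sub>F n in sequentially. RR_fin x ell n \<le> RR_partial x ell K n + \<epsilon>" if "K \<ge> 2 * h" for K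
    proof -
      have "\<forall>\<^sub>F n in sequentially. real n \<ge> real g + 2"
        using eventually_ge_at_top[of "g + 2"] by eventually_elim simp
      then show ?thesis
      proof eventually_elim
        case (elim n)
        then show ?case
          using RR_fin_le_partial[OF \<open>g > 0\<close> \<open>h \<ge> 1\<close> h, of ell K n] that \<open>4 / real g < \<epsilon>\<close> by simp
      qed
    qed
    then show "\<exists>K0. \<forall>K\<ge>K0. \<forall>\<^sub>F n in sequentially. RR_fin x ell n \<le> RR_partial x ell K n + \<epsilon>"
      by blast
  qed
qed

definition prefix_occurrences :: "(nat \<Rightarrow> 'a) \<Rightarrow> nat \<Rightarrow> nat \<Rightarrow> nat set" where
  "prefix_occurrences x ell n = {a. a + ell \<le> n \<and> (\<forall>k<ell. x (a + k) = x k)}"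

lemma finite_prefix_occurrences: "finite (prefix_occurrences x ell n)"
  by (rule finite_subset[of _ "{..n}"]) (auto simp: prefix_occurrences_def)

lemma card_prefix_occurrences_ge:
  assumes "R > 0" and recur: "\<forall>s. \<exists>i. s \<le> i \<and> i < s + R \<and> (\<forall>k<ell. x (i + k) = x k)"
  shows "(n - ell) div R \<le> card (prefix_occurrences x ell n)"
proof -
  define M where "M = (n - ell) div R"
  have "\<forall>t. \<exists>i. t * R \<le> i \<and> i < t * R + R \<and> (\<forall>k<ell. x (i + k) = x k)"
    using recur by blast
  then have "\<exists>c. \<forall>t. t * R \<le> c t \<and> c t < t * R + R \<and> (\<forall>k<ell. x (c t + k) = x k)"
    by (rule choice)
  then obtain c where c: "\<And>t. t * R \<le> c t \<and> c t < t * R + R \<and> (\<forall>k<ell. x (c t + k) = x k)"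
    by blast
  have "c t div R = t" for t
    using c[of t] \<open>R > 0\<close> by (intro div_nat_eqI) (auto simp: mult.commute)
  then have "inj_on c {..<M}"
    by (metis inj_onI)
  moreover have "c ` {..<M} \<subseteq> prefix_occurrences x ell n"
  proof (rule image_subsetI)
    fix t assume "t \<in> {..<M}"
    then have "Suc t * R \<le> M * R" by (intro mult_right_mono) auto
    also have "M * R \<le> n - ell" by (simp add: M_def div_times_less_eq_dividend)
    finally show "c t \<in> prefix_occurrences x ell n"
      using c[of t] by (auto simp: prefix_occurrences_def)
  qed
  ultimately have "card {..<M} \<le> card (prefix_occurrences x ell n)"
    by (metis card_image card_mono finite_prefix_occurrences)
  then show ?thesis by (simp add: M_def)
qed

text \<open>Any two distinct occurrences of the prefix of length \<open>\<ell>\<close> give a recurrence point on a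
  line of length at least \<open>\<ell>\<close>.\<close>
lemma card_line_points_ge_prefix_pairs:
  assumes "ell \<ge> 1"
  shows "card (prefix_occurrences x ell n) * card (prefix_occurrences x ell n)
    \<le> card (line_points x n {ell..n}) + card (prefix_occurrences x ell n)"
proof -
  let ?O = "prefix_occurrences x ell n"
  let ?P = "{(a, b). a \<noteq> b \<and> a + ell \<le> n \<and> b + ell \<le> n \<and> (\<forall>k<ell. x (a + k) = x (b + k))}"
  have fin: "finite ?O" "finite ?P"
    using finite_prefix_occurrences by (auto intro: finite_subset[of _ "{..n} \<times> {..n}"])
  have "?O \<times> ?O \<subseteq> ?P \<union> (\<lambda>a. (a, a)) ` ?O"
    by (auto simp: prefix_occurrences_def)
  then have "card (?O \<times> ?O) \<le> card (?P \<union> (\<lambda>a. (a, a)) ` ?O)"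
    using fin by (intro card_mono) auto
  then have "card ?O * card ?O \<le> card ?P + card ((\<lambda>a. (a, a)) ` ?O)"
    using card_Un_le[of ?P "(\<lambda>a. (a, a)) ` ?O"] by (simp add: card_cartesian_product)
  also have "card ?P \<le> card (line_points x n {ell..n})"
    using agreeing_windows_subset_line_points[OF assms(1), of n x]
      card_image_le[OF finite_line_points] card_mono[OF finite_imageI[OF finite_line_points]]
    by (meson le_trans)
  also have "card ((\<lambda>a. (a, a)) ` ?O) \<le> card ?O"
    by (rule card_image_le[OF fin(1)])
  finally show ?thesis by simp
qed

lemma square_minus_self_ge:
  fixes m r c :: real
  assumes "r > 0" "m \<ge> 0" and c: "m / (2 * r) + 1 \<le> c"
  shows "m ^ 2 / (4 * r ^ 2) \<le> c * c - c"
proof -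
  have "m ^ 2 / (4 * r ^ 2) = (m / (2 * r)) * (m / (2 * r))"
    by (simp add: power2_eq_square)
  also have "\<dots> \<le> c * (c - 1)"
    using c divide_nonneg_pos[OF \<open>m \<ge> 0\<close>, of "2 * r"] \<open>r > 0\<close> by (intro mult_mono) auto
  finally show ?thesis by (simp add: algebra_simps)
qed

lemma RR_fin_eventually_ge:
  assumes "recurrent_prefix x ell" and "ell \<ge> 1"
  shows "\<exists>c>0. \<forall>\<^sub>F n in sequentially. c \<le> RR_fin x ell n"
proof -
  obtain R where "R > 0" and recur: "\<forall>s. \<exists>i. s \<le> i \<and> i < s + R \<and> (\<forall>k<ell. x (i + k) = x k)"
    using assms(1) by (auto simp: recurrent_prefix_def)
  define r where "r = real R"
  have r: "r > 0" using \<open>R > 0\<close> by (simp add: r_def)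
  have "1 / (4 * r ^ 2) \<le> RR_fin x ell n" if n: "real n \<ge> 2 * real ell + 4 * r" "n \<ge> 2" for n
  proof -
    define c where "c = real (card (prefix_occurrences x ell n))"
    have "real (n - ell) = real ((n - ell) div R) * r + real ((n - ell) mod R)"
      unfolding r_def by (metis div_mult_mod_eq of_nat_add of_nat_mult)
    moreover have "real ((n - ell) mod R) < r"
      using \<open>R > 0\<close> by (simp add: r_def)
    moreover have "real ((n - ell) div R) \<le> c"
      using card_prefix_occurrences_ge[OF \<open>R > 0\<close> recur, of n] by (simp add: c_def)
    moreover have "real (n - ell) = real n - real ell"
      using n r by (intro of_nat_diff) linarith
    moreover have "real ((n - ell) div R) * r \<le> c * r"
      using \<open>real ((n - ell) div R) \<le> c\<close> r by (intro mult_right_mono) auto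
    ultimately have "real n - real ell < c * r + r"
      by linarith
    then have "real n / (2 * r) + 1 \<le> c"
      using n r by (simp add: field_simps)
    then have "real n ^ 2 / (4 * r ^ 2) \<le> real (card (line_points x n {ell..n}))"
      using square_minus_self_ge[OF r, of "real n" c] card_line_points_ge_prefix_pairs[OF assms(2), of x n]
      unfolding c_def by (simp flip: of_nat_mult of_nat_add of_nat_le_iff)
    moreover have "real n ^ 2 - real n > 0"
      using n by (simp add: power2_eq_square)
    moreover have "(real n ^ 2 - real n) / (4 * r ^ 2) \<le> real n ^ 2 / (4 * r ^ 2)"
      using r by (intro divide_right_mono) auto
    ultimately show ?thesis
      unfolding RR_fin_eq_card by (simp add: field_simps)
  qed
  moreover obtain N :: nat where "real N \<ge> 2 * real ell + 4 * r"
    using real_arch_simple by blast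
  ultimately have "\<forall>\<^sub>F n in sequentially. 1 / (4 * r ^ 2) \<le> RR_fin x ell n"
    unfolding eventually_sequentially by (intro exI[of _ "max N 2"]) auto
  then show ?thesis
    using r by (intro exI[of _ "1 / (4 * r ^ 2)"]) auto
qed

theorem recurrence_rate_limit:
  fixes x :: "nat \<Rightarrow> bool" and ell :: nat
  assumes "has_word_frequencies x" and "periodic_runs_bounded x" and "recurrent_prefix x ell"
    and "ell \<ge> 1"
  shows "\<exists>L. (\<lambda>n. RR_fin x ell n) \<longlonglongrightarrow> L \<and>
             (\<lambda>m. real (m + ell) * asymp_density (K_set x (m + ell))) sums L \<and> L > 0"
proof -
  let ?f = "\<lambda>m. real (m + ell) * inner_line_density x (m + ell)"
  have "summable ?f" and lim: "(\<lambda>n. RR_fin x ell n) \<longlonglongrightarrow> suminf ?f"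
    using RR_fin_tendsto[OF assms(1,2)] by auto
  moreover obtain c where "c > 0" and lower: "\<forall>\<^sub>F n in sequentially. c \<le> RR_fin x ell n"
    using RR_fin_eventually_ge[OF assms(3,4)] by blast
  have "c \<le> suminf ?f"
    by (rule tendsto_lowerbound[OF lim lower]) simp
  ultimately show ?thesis
    using \<open>c > 0\<close> asymp_density_K_set[OF assms(1)] summable_sums by fastforce
qed

theorem proposition3p6:
  fixes \<zeta> :: "bool \<Rightarrow> bool list" and q :: nat and x :: "nat \<Rightarrow> bool" and ell :: nat
  assumes "q \<ge> 2" and "const_length \<zeta> q"
    and "primitive_subst \<zeta>" and "aperiodic_subst \<zeta>"
    and "hd (\<zeta> False) = False"
    and "is_fixed_point_of_0 \<zeta> x"
    and "ell \<ge> 1"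
  shows "\<exists>L. (\<lambda>n. RR_fin x ell n) \<longlonglongrightarrow> L \<and>
             (\<lambda>m. real (m + ell) * asymp_density (K_set x (m + ell))) sums L \<and>
             L > 0"
proof -
  \<comment> \<open>\<open>hd (\<zeta> False) = False\<close> only guarantees that the fixed point exists; here it is given.\<close>
  interpret subst_fixed_point \<zeta> q x
    using assms by unfold_locales auto
  show ?thesis
    using recurrence_rate_limit[OF has_word_frequencies_fixed_point periodic_runs_bounded_fixed_point
        recurrent_prefix_fixed_point \<open>ell \<ge> 1\<close>] .
qed

end
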